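(* Let $a,b\ge1$ be coprime with $\frac ab\le\frac35$, and let $A_{ij}$ denote the coefficient of $u^iv^jw^{a+b-1-i-j}$ in $P_{a/b}(u,v,w)$, with $A_{ij}=0$ for pairs not corresponding to a monomial of $P_{a/b}$. Then the coefficients on the line $i+j=a+b-3$ are log-concave: for every integer $i$, with $j=a+b-3-i$, $$A_{i,j}^2\ge A_{i-1,j+1}\,A_{i+1,j-1}.$$
   Context: Markov polynomials. Let $x,y,z$ be indeterminates. Consider the set consisting of all rationals $\rho\in[0,1]$, each written in lowest terms $\rho=a/b$ with integers $a\ge 0$, $b\ge 1$, together with the formal symbol $1/0$. Define Laurent polynomials $M_\rho(x,y,z)$ recursively by $M_{1/0}=y$, $M_{0/1}=x$, $M_{1/1}=\frac{x^2+y^2}{z}$, and: whenever $a/b$, $c/d$ are in this set with $|ad-bc|=1$ and $(a+2c)/(b+2d)\in[0,1]$, then $M_{\frac{a+2c}{b+2d}}=\big(M_{c/d}^2+M_{\frac{a+c}{b+d}}^2\big)/M_{a/b}$. This determines $M_\rho$ for every rational $\rho\in[0,1]$. Numerator. For coprime $1\le a\le b$, $P_{a/b}(u,v,w)$ denotes the homogeneous polynomial of degree $a+b-1$ such that $M_{a/b}(x,y,z)=P_{a/b}(x^2,y^2,z^2)/(x^{a-1}y^{b-1}z^{a+b-1})$; its existence is known. *)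

theory Defs
  imports Complex_Main
begin

text \<open>Index set: pairs (a,b) representing a/b in [0,1] in lowest terms, plus the symbol 1/0.\<close>
definition frac_dom :: "nat \<times> nat \<Rightarrow> bool" where
  "frac_dom p \<longleftrightarrow> p = (1,0) \<or> (snd p \<ge> 1 \<and> fst p \<le> snd p \<and> coprime (fst p) (snd p))"

text \<open>A family of functions M_rho(x,y,z) (Laurent polynomials viewed as real functions)
  satisfying the defining recursion; zero outside the index set.\<close>
definition markov_family :: "(nat \<times> nat \<Rightarrow> real \<Rightarrow> real \<Rightarrow> real \<Rightarrow> real) \<Rightarrow> bool" where
  "markov_family F \<longleftrightarrow>
     (\<forall>p. \<not> frac_dom p \<longrightarrow> F p = (\<lambda>x y z. 0)) \<and>
     F (1,0) = (\<lambda>x y z. y) \<and>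
     F (0,1) = (\<lambda>x y z. x) \<and>
     F (1,1) = (\<lambda>x y z. (x^2 + y^2) / z) \<and>
     (\<forall>a b c d. frac_dom (a,b) \<and> frac_dom (c,d) \<and>
        \<bar>int a * int d - int b * int c\<bar> = 1 \<and> a + 2*c \<le> b + 2*d \<longrightarrow>
        F (a + 2*c, b + 2*d) =
          (\<lambda>x y z. ((F (c,d) x y z)^2 + (F (a+c, b+d) x y z)^2) / F (a,b) x y z))"

definition markovM :: "nat \<times> nat \<Rightarrow> real \<Rightarrow> real \<Rightarrow> real \<Rightarrow> real" where
  "markovM = (THE F. markov_family F)"

text \<open>Coefficients of P_{a/b}: Pcoeff a b i j is the coefficient of u^i v^j w^(a+b-1-i-j).\<close>
definition Pcoeff :: "nat \<Rightarrow> nat \<Rightarrow> nat \<Rightarrow> nat \<Rightarrow> real" where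
  "Pcoeff a b = (THE A.
     (\<forall>i j. a + b - 1 < i + j \<longrightarrow> A i j = 0) \<and>
     (\<forall>x y z :: real. x > 0 \<longrightarrow> y > 0 \<longrightarrow> z > 0 \<longrightarrow>
        markovM (a,b) x y z =
          (\<Sum>i\<le>a+b-1. \<Sum>j\<le>a+b-1-i. A i j * (x^2)^i * (y^2)^j * (z^2)^(a+b-1-i-j))
          / (x^(a-1) * y^(b-1) * z^(a+b-1))))"

definition Acoef :: "nat \<Rightarrow> nat \<Rightarrow> int \<Rightarrow> int \<Rightarrow> real" where
  "Acoef a b i j = (if i \<ge> 0 \<and> j \<ge> 0 then Pcoeff a b (nat i) (nat j) else 0)"

end

theory Submission
  imports Defs "HOL-Computational_Algebra.Polynomial"
begin

text \<open>
  Every reduced fraction in \<open>[0, 1]\<close> other than \<open>0/1\<close> and \<open>1/1\<close> is the mediant \<open>l + r\<close> of Farey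
  neighbours \<open>l < r\<close>, and can be written in exactly one way as \<open>(a + 2c)/(b + 2d)\<close> with \<open>a/b\<close>, \<open>c/d\<close>
  neighbours, so the recursion determines \<open>M\<close>. Along the Stern--Brocot tree, the triples
  \<open>(M_l, M_r, M_(l+r))\<close> satisfy \<open>A^2 + B^2 + C^2 = (x^2 + y^2 + z^2)/(xyz) ABC\<close>; hence the recursion
  \<open>M_(a+2c) = (M_c^2 + M_(a+c)^2)/M_a\<close> is the Vieta exchange
  \<open>M_(a+2c) = (x^2 + y^2 + z^2)/(xyz) M_c M_(a+c) - M_a\<close>, which on numerators reads
  \<open>P_(a+2c) = (u + v + w) P_c P_(a+c) - u^c1 v^c2 w^(c1+c2) P_a\<close>.

  Following the coefficients of \<open>w^0, w^1, w^2\<close> through this recursion, the part of \<open>P_(a/b)\<close> of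
  degree 2 in \<open>w\<close> is \<open>(u + v)^(a+b-5)\<close> times an explicit binary quadratic form. For \<open>5a \<le> 3b\<close>
  that form has nonnegative coefficients and nonnegative discriminant, so the whole layer is a
  product of linear forms with nonnegative coefficients, and such products have log-concave
  coefficients. The line \<open>i + j = a + b - 3\<close> is exactly this layer.
\<close>

section \<open>Farey pairs and the well-definedness of \<open>M\<close>\<close>

lemma det_eq_1_imp_coprime:
  assumes "\<bar>int c * int q - int d * int p\<bar> = 1"
  shows "coprime p q"
proof (rule coprimeI)
  fix k assume "k dvd p" "k dvd q"
  then have "int k dvd \<bar>int c * int q - int d * int p\<bar>" by simp
  then show "is_unit k" using assms by simp
qed

definition farey_pair :: "nat \<Rightarrow> nat \<Rightarrow> nat \<Rightarrow> nat \<Rightarrow> bool" where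
  "farey_pair l1 l2 r1 r2 \<longleftrightarrow> r1 * l2 = l1 * r2 + 1 \<and> r1 \<le> r2"

lemma farey_pair_int: "farey_pair l1 l2 r1 r2 \<Longrightarrow> int r1 * int l2 = int l1 * int r2 + 1"
  unfolding farey_pair_def by (metis of_nat_add of_nat_mult of_nat_1)

lemma farey_pair_bounds:
  assumes "farey_pair l1 l2 r1 r2"
  shows "l1 < l2" "1 \<le> r1" "1 \<le> l2"
proof -
  have e: "r1 * l2 = l1 * r2 + 1" and r: "r1 \<le> r2" using assms by (auto simp: farey_pair_def)
  show "1 \<le> r1" "1 \<le> l2" using e by (cases r1; cases l2; simp)+
  show "l1 < l2"
  proof (rule ccontr)
    assume "\<not> l1 < l2"
    then have "r1 * l2 \<le> l1 * r2" using r by (metis mult_le_mono mult.commute not_less)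
    then show False using e by linarith
  qed
qed

lemma farey_pair_frac_dom:
  assumes "farey_pair l1 l2 r1 r2"
  shows "frac_dom (l1, l2)" "frac_dom (r1, r2)" "frac_dom (l1 + r1, l2 + r2)"
proof -
  have i: "int r1 * int l2 = int l1 * int r2 + 1" by (rule farey_pair_int[OF assms])
  note b = farey_pair_bounds[OF assms]
  have r: "r1 \<le> r2" using assms by (simp add: farey_pair_def)
  have "coprime l1 l2" "coprime r1 r2" "coprime (l1 + r1) (l2 + r2)"
    by (rule det_eq_1_imp_coprime[where c=r1 and d=r2] det_eq_1_imp_coprime[where c=l1 and d=l2];
        use i in \<open>simp add: algebra_simps\<close>)+
  then show "frac_dom (l1, l2)" "frac_dom (r1, r2)" "frac_dom (l1 + r1, l2 + r2)"
    using b r by (auto simp: frac_dom_def)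
qed

lemma farey_step_le:
  fixes x y l1 l2 :: nat
  assumes "x * l2 = l1 * y + 1" "l1 < l2" "1 \<le> y"
  shows "x \<le> y"
proof (rule ccontr)
  assume "\<not> x \<le> y"
  then have "(y + 1) * l2 \<le> x * l2" by (intro mult_le_mono1) simp
  moreover have "y * (l1 + 1) \<le> y * l2" using assms(2) by (intro mult_le_mono2) simp
  ultimately show False using assms by (simp add: algebra_simps)
qed

lemma farey_pair_cases:
  assumes "farey_pair l1 l2 r1 r2"
  shows "(l1, l2, r1, r2) = (0, 1, 1, 1) \<or>
         (l1 \<le> r1 \<and> l2 \<le> r2 \<and> farey_pair l1 l2 (r1 - l1) (r2 - l2)) \<or>
         (r1 \<le> l1 \<and> r2 \<le> l2 \<and> farey_pair (l1 - r1) (l2 - r2) r1 r2)"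
proof -
  have e: "r1 * l2 = l1 * r2 + 1" and r: "r1 \<le> r2" using assms by (auto simp: farey_pair_def)
  note b = farey_pair_bounds[OF assms]
  consider "l1 \<le> r1" "l2 \<le> r2" | "r1 \<le> l1" "r2 \<le> l2" | "l1 < r1" "r2 < l2" | "r1 < l1" "l2 < r2"
    by linarith
  then show ?thesis
  proof cases
    case 1
    have "int ((r1 - l1) * l2) = int (l1 * (r2 - l2) + 1)"
      using farey_pair_int[OF assms] 1 by (simp add: of_nat_diff algebra_simps)
    then have e': "(r1 - l1) * l2 = l1 * (r2 - l2) + 1" by (simp only: of_nat_eq_iff)
    show ?thesis
    proof (cases "r2 = l2")
      case True
      then have "(r1 - l1) * l2 = 1" using e' by simp
      then show ?thesis using True b 1 by auto
    next
      case False
      then have "r1 - l1 \<le> r2 - l2" using 1 b by (intro farey_step_le[OF e']) auto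
      then show ?thesis using 1 e' by (simp add: farey_pair_def)
    qed
  next
    case 2
    have "int (r1 * (l2 - r2)) = int ((l1 - r1) * r2 + 1)"
      using farey_pair_int[OF assms] 2 by (simp add: of_nat_diff algebra_simps)
    then have "r1 * (l2 - r2) = (l1 - r1) * r2 + 1" by (simp only: of_nat_eq_iff)
    then show ?thesis using 2 r by (simp add: farey_pair_def)
  next
    case 3
    have "int r1 * (int r2 + 1) \<le> int r1 * int l2" using 3 by (intro mult_left_mono) auto
    moreover have "int l1 * int r2 \<le> (int r1 - 1) * int r2" using 3 by (intro mult_right_mono) auto
    ultimately have "int r1 + int r2 \<le> 1" using farey_pair_int[OF assms] by (simp add: algebra_simps)
    then show ?thesis using b r by linarith
  next
    case 4
    have "r1 * l2 \<le> r1 * r2" "r1 * r2 < l1 * r2" using 4 b by simp_all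
    then show ?thesis using e by linarith
  qed
qed

lemma farey_pair_exists:
  assumes "coprime a b" "1 \<le> a" "a < (b::nat)"
  shows "\<exists>l1 l2 r1 r2. l1 + r1 = a \<and> l2 + r2 = b \<and> farey_pair l1 l2 r1 r2"
proof -
  \<comment> \<open>\<open>l2\<close> is the inverse of \<open>a\<close> modulo \<open>b\<close>, which makes \<open>l1/l2\<close> the left neighbour of \<open>a/b\<close>.\<close>
  obtain x y where "a * x = b * y + gcd a b" using bezout_nat[of a b] assms(2) by auto
  then have xy: "a * x = b * y + 1" using assms(1) by simp
  define l2 where "l2 = x mod b"
  have b2: "b \<ge> 2" using assms by linarith
  have "(a * l2) mod b = (a * x) mod b" unfolding l2_def by (simp add: mod_mult_right_eq)
  also have "\<dots> = 1" using xy b2 by (simp add: mod_Suc)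
  finally have m: "(a * l2) mod b = 1" .
  define l1 where "l1 = (a * l2) div b"
  have e: "a * l2 = b * l1 + 1" using m unfolding l1_def by (metis div_mult_mod_eq add.commute mult.commute)
  have l2b: "l2 < b" unfolding l2_def using b2 by simp
  have "a * l2 < a * b" using l2b assms(2) by simp
  then have "b * l1 < a * b" using e by linarith
  then have l1a: "l1 < a" by (simp add: mult.commute)
  have ie: "int a * int l2 = int b * int l1 + 1" using e by (metis of_nat_add of_nat_mult of_nat_1)
  have "(int b - int a) * (int b - 1 - int l2) \<ge> 0" using assms l2b by (intro mult_nonneg_nonneg) auto
  then have "int b * (int a - int l1) \<le> int b * (int b - int l2)"
    using ie assms(3) by (simp add: algebra_simps; linarith)
  then have "a - l1 \<le> b - l2" using b2 l1a l2b by (simp add: mult_le_cancel_left)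
  moreover have "int ((a - l1) * l2) = int (l1 * (b - l2) + 1)"
    using ie l1a l2b by (simp add: of_nat_diff algebra_simps)
  ultimately have "farey_pair l1 l2 (a - l1) (b - l2)" by (simp only: farey_pair_def of_nat_eq_iff)
  then show ?thesis using l1a l2b by (intro exI[of _ l1] exI[of _ l2] exI[of _ "a - l1"] exI[of _ "b - l2"]) simp
qed

fun markov_split :: "nat \<Rightarrow> nat \<Rightarrow> nat \<times> nat \<times> nat \<times> nat \<Rightarrow> bool" where
  "markov_split p q (a, b, c, d) \<longleftrightarrow> frac_dom (a, b) \<and> frac_dom (c, d) \<and>
     \<bar>int a * int d - int b * int c\<bar> = 1 \<and> p = a + 2 * c \<and> q = b + 2 * d"

lemma frac_dom_0_left_iff: "frac_dom (0, b) \<longleftrightarrow> b = 1"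
  by (auto simp: frac_dom_def)

lemma not_frac_dom_0_0: "\<not> frac_dom (0, 0)"
  by (simp add: frac_dom_0_left_iff)

lemma markov_split_det:
  assumes "markov_split p q (a, b, c, d)"
  shows "\<bar>int c * int q - int d * int p\<bar> = 1"
proof -
  have e: "int c * int q - int d * int p = - (int a * int d - int b * int c)"
    using assms by (simp add: algebra_simps)
  show ?thesis unfolding e using assms by (simp add: abs_minus_commute)
qed

lemma coprime_mult_eq_imp_0:
  fixes X Y :: int
  assumes "coprime (int p) (int q)" "X * int q = Y * int p" "\<bar>X\<bar> < int p"
  shows "X = 0" "Y = 0"
proof -
  have "int p dvd X" using assms(1,2) by (metis coprime_dvd_mult_left_iff dvd_triv_right)
  show "X = 0"
  proof (rule ccontr)
    assume "X \<noteq> 0"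
    then have "\<bar>int p\<bar> \<le> \<bar>X\<bar>" using \<open>int p dvd X\<close> by (rule dvd_imp_le_int)
    then show False using assms(3) by linarith
  qed
  then show "Y = 0" using assms(2,3) by simp
qed

lemma markov_split_unique:
  assumes "markov_split p q (a, b, c, d)" "markov_split p q (a', b', c', d')"
  shows "(a, b, c, d) = (a', b', c', d')"
proof -
  have fa: "frac_dom (a, b)" "frac_dom (c, d)" "frac_dom (a', b')" "frac_dom (c', d')"
    and pq: "p = a + 2 * c" "q = b + 2 * d" "p = a' + 2 * c'" "q = b' + 2 * d'"
    using assms by auto
  have X: "\<bar>int c * int q - int d * int p\<bar> = 1" "\<bar>int c' * int q - int d' * int p\<bar> = 1"
    using markov_split_det[OF assms(1)] markov_split_det[OF assms(2)] by auto
  have cop: "coprime (int p) (int q)" using det_eq_1_imp_coprime[OF X(1)] by simp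
  have "p \<noteq> 0"
  proof
    assume "p = 0"
    then have "a = 0" "c = 0" using pq by auto
    then show False using X(1) fa frac_dom_0_left_iff pq by auto
  qed
  \<comment> \<open>Both \<open>(c, d)\<close> and \<open>(c', d')\<close> solve \<open>c q - d p = \<plusminus>1\<close> with \<open>2c \<le> p\<close>, so \<open>p\<close> divides
    the difference or the sum of \<open>c\<close> and \<open>c'\<close>.\<close>
  consider (same) "(int c - int c') * int q = (int d - int d') * int p"
    | (opposite) "(int c + int c') * int q = (int d + int d') * int p"
    using X by (auto simp: abs_if algebra_simps split: if_splits)
  then show ?thesis
  proof cases
    case same
    have "\<bar>int c - int c'\<bar> < int p" using pq \<open>p \<noteq> 0\<close> by linarith
    then have "c = c'" "d = d'" using coprime_mult_eq_imp_0[OF cop same] by auto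
    then show ?thesis using pq by auto
  next
    case opposite
    show ?thesis
    proof (cases "c + c' = p")
      case True
      have "(int d + int d') * int p = (int c + int c') * int q" using opposite by simp
      also have "\<dots> = int q * int p" using True by (simp flip: of_nat_add)
      finally have "d + d' = q" using \<open>p \<noteq> 0\<close> by simp
      then have "(a, b) = (0, 0)" using True pq by simp
      then show ?thesis using fa not_frac_dom_0_0 by simp
    next
      case False
      then have "\<bar>int c + int c'\<bar> < int p" using pq by linarith
      then have "c = 0" "d = 0" using coprime_mult_eq_imp_0[OF cop opposite] by auto
      then show ?thesis using fa not_frac_dom_0_0 by simp
    qed
  qed
qed

lemma markov_split_exists:
  assumes "frac_dom (p, q)" "(p, q) \<notin> {(1, 0), (0, 1), (1, 1)}"
  shows "\<exists>t. markov_split p q t"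
proof -
  have cop: "coprime p q" and "p \<le> q" "q \<ge> 1" using assms by (auto simp: frac_dom_def)
  then have "1 \<le> p" "p < q" using assms by (cases "p = 0"; cases "p = q"; auto)+
  then obtain l1 l2 r1 r2 where lr: "l1 + r1 = p" "l2 + r2 = q" and f: "farey_pair l1 l2 r1 r2"
    using farey_pair_exists[OF cop] by blast
  from farey_pair_cases[OF f] show ?thesis
  proof (elim disjE conjE)
    assume "(l1, l2, r1, r2) = (0, 1, 1, 1)"
    then have "p = 1" "q = 2" using lr by auto
    then have "markov_split p q (1, 0, 0, 1)" by (simp add: frac_dom_def)
    then show ?thesis by blast
  next
    assume h: "l1 \<le> r1" "l2 \<le> r2" and f': "farey_pair l1 l2 (r1 - l1) (r2 - l2)"
    have "markov_split p q (r1 - l1, r2 - l2, l1, l2)"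
      using farey_pair_frac_dom[OF f'] farey_pair_int[OF f'] lr h by (simp add: algebra_simps)
    then show ?thesis by blast
  next
    assume h: "r1 \<le> l1" "r2 \<le> l2" and f': "farey_pair (l1 - r1) (l2 - r2) r1 r2"
    have "markov_split p q (l1 - r1, l2 - r2, r1, r2)"
      using farey_pair_frac_dom[OF f'] farey_pair_int[OF f'] lr h by (simp add: algebra_simps)
    then show ?thesis by blast
  qed
qed

lemma markov_split_smaller:
  assumes "markov_split p q (a, b, c, d)"
  shows "a + b < p + q" "c + d < p + q" "a + c + (b + d) < p + q"
proof -
  have "a + b \<ge> 1" "c + d \<ge> 1" using assms by (auto simp: frac_dom_def)
  then show "a + b < p + q" "c + d < p + q" "a + c + (b + d) < p + q" using assms by auto
qed

lemma frac_dom_0_right_iff: "frac_dom (a, 0) \<longleftrightarrow> a = 1"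
  by (auto simp: frac_dom_def)

lemma markov_split_frac_dom:
  assumes "markov_split p q (a, b, c, d)" "p \<le> q"
  shows "frac_dom (p, q)" "(p, q) \<notin> {(1, 0), (0, 1), (1, 1)}"
proof -
  have fd: "frac_dom (a, b)" "frac_dom (c, d)" and det: "\<bar>int a * int d - int b * int c\<bar> = 1"
    and pq: "p = a + 2 * c" "q = b + 2 * d"
    using assms(1) by auto
  have q0: "q \<noteq> 0"
  proof
    assume "q = 0"
    then have "a = 1" "c = 1" "b = 0" "d = 0" using fd pq frac_dom_0_right_iff by auto
    then show False using det by simp
  qed
  have "p \<noteq> 0"
  proof
    assume "p = 0"
    then have "a = 0" "c = 0" using pq by auto
    then show False using det by simp
  qed
  moreover have "q \<noteq> 1"
  proof
    assume "q = 1"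
    then have "d = 0" using pq by simp
    then have "c = 1" using fd frac_dom_0_right_iff by simp
    then show False using \<open>q = 1\<close> assms(2) pq by simp
  qed
  ultimately show "(p, q) \<notin> {(1, 0), (0, 1), (1, 1)}" using q0 by auto
  have "coprime p q" by (rule det_eq_1_imp_coprime[OF markov_split_det[OF assms(1)]])
  then show "frac_dom (p, q)" using q0 assms(2) by (simp add: frac_dom_def)
qed

function markov_rec :: "nat \<Rightarrow> nat \<Rightarrow> real \<Rightarrow> real \<Rightarrow> real \<Rightarrow> real" where
  "markov_rec p q x y z =
     (if (p, q) = (1, 0) then y else if (p, q) = (0, 1) then x
      else if (p, q) = (1, 1) then (x^2 + y^2) / z
      else if frac_dom (p, q) \<and> (\<exists>t. markov_split p q t) then
        (case SOME t. markov_split p q t of (a, b, c, d) \<Rightarrow>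
           ((markov_rec c d x y z)^2 + (markov_rec (a + c) (b + d) x y z)^2) / markov_rec a b x y z)
      else 0)"
  by pat_completeness auto
termination
proof (relation "measure (\<lambda>(p, q, x, y, z). p + q)")
  show "wf (measure (\<lambda>(p, q, x, y, z). p + q))" by simp
qed (metis (mono_tags, lifting) in_measure case_prod_conv markov_split_smaller someI_ex)+

declare markov_rec.simps [simp del]

lemma markov_rec_base:
  "markov_rec 1 0 x y z = y" "markov_rec 0 1 x y z = x" "markov_rec 1 1 x y z = (x^2 + y^2) / z"
  by (simp_all only: markov_rec.simps[of 1 0] markov_rec.simps[of 0 1] markov_rec.simps[of 1 1]) simp_all

lemma markov_family_markov_rec: "markov_family (\<lambda>(p, q). markov_rec p q)"
  unfolding markov_family_def
proof (intro conjI allI impI)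
  fix p :: "nat \<times> nat" assume p: "\<not> frac_dom p"
  have "frac_dom (1, 0)" "frac_dom (0, 1)" "frac_dom (1, 1)" by (auto simp: frac_dom_def)
  then have "markov_rec (fst p) (snd p) x y z = 0" for x y z
    using p by (subst markov_rec.simps) auto
  then show "(case p of (p, q) \<Rightarrow> markov_rec p q) = (\<lambda>x y z. 0)"
    by (simp add: case_prod_beta fun_eq_iff)
next
  fix a b c d
  assume h: "frac_dom (a, b) \<and> frac_dom (c, d) \<and> \<bar>int a * int d - int b * int c\<bar> = 1 \<and> a + 2 * c \<le> b + 2 * d"
  then have split: "markov_split (a + 2 * c) (b + 2 * d) (a, b, c, d)" by simp
  moreover have "frac_dom (a + 2 * c, b + 2 * d)" "(a + 2 * c, b + 2 * d) \<notin> {(1, 0), (0, 1), (1, 1)}"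
    using markov_split_frac_dom[OF split] h by auto
  moreover have "(SOME t. markov_split (a + 2 * c) (b + 2 * d) t) = (a, b, c, d)"
    using split markov_split_unique by (metis prod_cases4 someI)
  ultimately have "markov_rec (a + 2 * c) (b + 2 * d) x y z =
    ((markov_rec c d x y z)^2 + (markov_rec (a + c) (b + d) x y z)^2) / markov_rec a b x y z" for x y z
    by (subst markov_rec.simps) auto
  then show "(case (a + 2 * c, b + 2 * d) of (p, q) \<Rightarrow> markov_rec p q) =
    (\<lambda>x y z. (((case (c, d) of (p, q) \<Rightarrow> markov_rec p q) x y z)^2 +
              ((case (a + c, b + d) of (p, q) \<Rightarrow> markov_rec p q) x y z)^2) /
             (case (a, b) of (p, q) \<Rightarrow> markov_rec p q) x y z)"
    by (simp add: fun_eq_iff)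
qed (simp_all add: fun_eq_iff markov_rec_base[unfolded One_nat_def])

lemma markov_family_unique:
  assumes F: "markov_family F" and G: "markov_family G"
  shows "F = G"
proof -
  have "F (p, q) = G (p, q)" for p q
  proof (induction "p + q" arbitrary: p q rule: less_induct)
    case less
    show ?case
    proof (cases "frac_dom (p, q) \<and> (p, q) \<notin> {(1, 0), (0, 1), (1, 1)}")
      case False
      then show ?thesis using F G unfolding markov_family_def by auto
    next
      case True
      then obtain a b c d where split: "markov_split p q (a, b, c, d)"
        using markov_split_exists by (metis prod_cases4)
      then have h: "frac_dom (a, b)" "frac_dom (c, d)" "\<bar>int a * int d - int b * int c\<bar> = 1"
        "a + 2 * c \<le> b + 2 * d" and pq: "p = a + 2 * c" "q = b + 2 * d"
        using True by (auto simp: frac_dom_def)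
      have IH: "F (a, b) = G (a, b)" "F (c, d) = G (c, d)" "F (a + c, b + d) = G (a + c, b + d)"
        using less markov_split_smaller[OF split] by auto
      show ?thesis
        using F G h IH unfolding pq markov_family_def by simp
    qed
  qed
  then show ?thesis by (intro ext) (metis prod.collapse)
qed

lemma markov_family_markovM: "markov_family markovM"
proof -
  have "\<exists>!F. markov_family F" using markov_family_markov_rec markov_family_unique by blast
  then show ?thesis unfolding markovM_def by (rule theI')
qed

lemma markovM_base:
  "markovM (1, 0) x y z = y" "markovM (0, 1) x y z = x" "markovM (1, 1) x y z = (x^2 + y^2) / z"
  using markov_family_markovM unfolding markov_family_def by simp_all

lemma markovM_rec:
  assumes "frac_dom (a, b)" "frac_dom (c, d)" "\<bar>int a * int d - int b * int c\<bar> = 1"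
    "a + 2 * c \<le> b + 2 * d"
  shows "markovM (a + 2 * c, b + 2 * d) x y z =
    ((markovM (c, d) x y z)^2 + (markovM (a + c, b + d) x y z)^2) / markovM (a, b) x y z"
  using markov_family_markovM assms unfolding markov_family_def by simp

section \<open>Numerators as polynomials\<close>

text \<open>A homogeneous polynomial of degree \<open>n\<close> in \<open>u, v, w\<close> is encoded by its dehomogenisation
  at \<open>v = 1\<close>: a polynomial in \<open>w\<close> whose coefficients are polynomials in \<open>u\<close>.\<close>

definition poly2 :: "real poly poly \<Rightarrow> real \<Rightarrow> real \<Rightarrow> real" where
  "poly2 P u w = poly (poly P [:w:]) u"

definition hpoly :: "nat \<Rightarrow> real poly poly \<Rightarrow> real \<Rightarrow> real \<Rightarrow> real \<Rightarrow> real" where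
  "hpoly n P u v w = v^n * poly2 P (u / v) (w / v)"

definition tdeg_le :: "nat \<Rightarrow> real poly poly \<Rightarrow> bool" where
  "tdeg_le n P \<longleftrightarrow> (\<forall>k i. coeff (coeff P k) i \<noteq> 0 \<longrightarrow> i + k \<le> n)"

definition u_plus_v :: "real poly" where
  "u_plus_v = [:1, 1:]"

definition u_plus_v_plus_w :: "real poly poly" where
  "u_plus_v_plus_w = [:u_plus_v, 1:]"

definition mono_uw :: "nat \<Rightarrow> nat \<Rightarrow> real poly poly" where
  "mono_uw i k = monom (monom 1 i) k"

lemma u_plus_v_nonzero [simp]: "u_plus_v \<noteq> 0"
  by (simp add: u_plus_v_def)

lemma poly2_mult [simp]: "poly2 (P * Q) u w = poly2 P u w * poly2 Q u w"
  and poly2_diff [simp]: "poly2 (P - Q) u w = poly2 P u w - poly2 Q u w"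
  and poly2_1 [simp]: "poly2 1 u w = 1"
  and poly2_u_plus_v_plus_w: "poly2 u_plus_v_plus_w u w = 1 + u + w"
  and poly2_mono_uw: "poly2 (mono_uw i k) u w = u^i * w^k"
  by (simp_all add: poly2_def u_plus_v_plus_w_def u_plus_v_def mono_uw_def poly_monom)

lemma hpoly_mult: "hpoly (m + n) (P * Q) u v w = hpoly m P u v w * hpoly n Q u v w"
  by (simp add: hpoly_def power_add)

lemma hpoly_diff: "hpoly n (P - Q) u v w = hpoly n P u v w - hpoly n Q u v w"
  by (simp add: hpoly_def algebra_simps)

lemma hpoly_1: "hpoly 0 1 u v w = 1"
  by (simp add: hpoly_def)

lemma hpoly_u_plus_v_plus_w: "v \<noteq> 0 \<Longrightarrow> hpoly 1 u_plus_v_plus_w u v w = u + v + w"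
  by (simp add: hpoly_def poly2_u_plus_v_plus_w field_simps)

lemma hpoly_mono_uw_mult:
  assumes "v \<noteq> 0" "n = 2 * (i + j) + m"
  shows "hpoly n (mono_uw i (i + j) * P) u v w = u^i * v^j * w^(i + j) * hpoly m P u v w"
proof -
  have "v^(2 * (i + j)) = v^i * v^i * v^j * v^j" by (simp add: power_add mult_2)
  then have "v^(2 * (i + j)) * (u / v)^i * (w / v)^(i + j) = u^i * v^j * w^(i + j)"
    using assms(1) by (simp add: power_divide power_add field_simps)
  then show ?thesis
    by (simp add: hpoly_def poly2_mono_uw assms(2) power_add algebra_simps)
qed

lemma tdeg_le_coeff_eq_0: "tdeg_le n P \<Longrightarrow> n < i + k \<Longrightarrow> coeff (coeff P k) i = 0"
  unfolding tdeg_le_def by (meson not_le)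

lemma tdeg_le_coeff_eq_0': "tdeg_le n P \<Longrightarrow> n < k \<Longrightarrow> coeff P k = 0"
  by (intro poly_eqI) (simp add: tdeg_le_coeff_eq_0)

lemma tdeg_le_degree:
  assumes "tdeg_le n P"
  shows "degree P \<le> n" "degree (coeff P k) \<le> n"
  using assms by (auto intro!: degree_le simp: tdeg_le_coeff_eq_0 tdeg_le_coeff_eq_0')

lemma tdeg_le_mono: "tdeg_le n P \<Longrightarrow> n \<le> m \<Longrightarrow> tdeg_le m P"
  unfolding tdeg_le_def by fastforce

lemma tdeg_le_diff: "tdeg_le n P \<Longrightarrow> tdeg_le n Q \<Longrightarrow> tdeg_le n (P - Q)"
  unfolding tdeg_le_def by (metis coeff_diff diff_zero)

lemma tdeg_le_1: "tdeg_le 0 1"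
  unfolding tdeg_le_def by (auto simp: coeff_1 split: if_splits)

lemma tdeg_le_u_plus_v_plus_w: "tdeg_le 1 u_plus_v_plus_w"
  unfolding tdeg_le_def u_plus_v_plus_w_def u_plus_v_def
  by (auto simp: coeff_pCons coeff_1 split: nat.splits if_splits)

lemma tdeg_le_mono_uw: "tdeg_le (i + k) (mono_uw i k)"
  unfolding tdeg_le_def mono_uw_def by (auto simp: coeff_monom split: if_splits)

lemma tdeg_le_mult:
  assumes "tdeg_le m P" "tdeg_le n Q"
  shows "tdeg_le (m + n) (P * Q)"
  unfolding tdeg_le_def
proof (intro allI impI)
  fix k i assume nz: "coeff (coeff (P * Q) k) i \<noteq> 0"
  show "i + k \<le> m + n"
  proof (rule ccontr)
    assume big: "\<not> i + k \<le> m + n"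
    have "coeff (coeff (P * Q) k) i =
        (\<Sum>k1\<le>k. \<Sum>j\<le>i. coeff (coeff P k1) j * coeff (coeff Q (k - k1)) (i - j))"
      by (simp add: coeff_mult coeff_sum)
    also have "\<dots> = 0"
    proof (intro sum.neutral ballI)
      fix k1 j assume "k1 \<in> {..k}" "j \<in> {..i}"
      then have "m < j + k1 \<or> n < (i - j) + (k - k1)" using big by auto
      then show "coeff (coeff P k1) j * coeff (coeff Q (k - k1)) (i - j) = 0"
        using assms by (auto simp: tdeg_le_coeff_eq_0)
    qed
    finally show False using nz by simp
  qed
qed

text \<open>Writing \<open>M_(p/q) = xyz H(x^2, y^2, z^2) / (x^p y^q z^(p+q))\<close>, the exchange
  \<open>M_(a+2c) = (x^2 + y^2 + z^2)/(xyz) M_c M_(a+c) - M_a\<close> becomes this identity of numerators.\<close>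

definition mutate :: "real poly poly \<Rightarrow> real poly poly \<Rightarrow> real poly poly \<Rightarrow> nat \<Rightarrow> nat \<Rightarrow> real poly poly" where
  "mutate Pa Pc Pm c1 c2 = u_plus_v_plus_w * Pc * Pm - mono_uw c1 (c1 + c2) * Pa"

lemma tdeg_le_mutate:
  assumes "tdeg_le na Pa" "tdeg_le nc Pc" "tdeg_le nm Pm"
    and "n = 1 + nc + nm" "n = 2 * (c1 + c2) + na"
  shows "tdeg_le n (mutate Pa Pc Pm c1 c2)"
proof -
  have "tdeg_le n (u_plus_v_plus_w * Pc * Pm)"
    unfolding assms(4) by (intro tdeg_le_mult tdeg_le_u_plus_v_plus_w assms(2,3))
  moreover have "tdeg_le n (mono_uw c1 (c1 + c2) * Pa)"
    by (rule tdeg_le_mono[OF tdeg_le_mult[OF tdeg_le_mono_uw assms(1)]]) (simp add: assms(5))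
  ultimately show ?thesis unfolding mutate_def by (rule tdeg_le_diff)
qed

lemma hpoly_mutate:
  assumes "v \<noteq> 0" "n = 1 + nc + nm" "n = 2 * (c1 + c2) + na"
  shows "hpoly n (mutate Pa Pc Pm c1 c2) u v w =
    (u + v + w) * hpoly nc Pc u v w * hpoly nm Pm u v w - u^c1 * v^c2 * w^(c1 + c2) * hpoly na Pa u v w"
proof -
  have "hpoly (1 + nc + nm) (u_plus_v_plus_w * Pc * Pm) u v w =
      (u + v + w) * hpoly nc Pc u v w * hpoly nm Pm u v w"
    by (simp only: hpoly_mult hpoly_u_plus_v_plus_w[OF assms(1)])
  then show ?thesis
    unfolding mutate_def hpoly_diff hpoly_mono_uw_mult[OF assms(1,3)] by (simp add: assms(2))
qed

definition markov_eq :: "(real \<Rightarrow> real \<Rightarrow> real \<Rightarrow> real) \<Rightarrow> (real \<Rightarrow> real \<Rightarrow> real \<Rightarrow> real) \<Rightarrow>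
    (real \<Rightarrow> real \<Rightarrow> real \<Rightarrow> real) \<Rightarrow> bool" where
  "markov_eq A B C \<longleftrightarrow> (\<forall>x y z. 0 < x \<longrightarrow> 0 < y \<longrightarrow> 0 < z \<longrightarrow>
      (A x y z)^2 + (B x y z)^2 + (C x y z)^2 =
        (x^2 + y^2 + z^2) / (x * y * z) * A x y z * B x y z * C x y z)"

lemma markov_eq_commute: "markov_eq A B C \<Longrightarrow> markov_eq B A C"
  unfolding markov_eq_def by (auto simp: algebra_simps)

definition represents :: "nat \<Rightarrow> nat \<Rightarrow> real poly poly \<Rightarrow> bool" where
  "represents p q P \<longleftrightarrow> tdeg_le (p + q - 1) P \<and> (\<forall>x y z. 0 < x \<longrightarrow> 0 < y \<longrightarrow> 0 < z \<longrightarrow>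
      0 < markovM (p, q) x y z \<and>
      markovM (p, q) x y z * (x^p * y^q * z^(p + q)) = x * y * z * hpoly (p + q - 1) P (x^2) (y^2) (z^2))"

lemma markov_exchange:
  fixes A B C N K :: real
  assumes "A^2 + B^2 + C^2 = K * A * B * C" "A \<noteq> 0" "N = (B^2 + C^2) / A"
  shows "N = K * B * C - A" "B^2 + C^2 + N^2 = K * B * C * N"
proof -
  have AN: "A * N = B^2 + C^2" using assms(2,3) by simp
  then have "A * (K * B * C) = A * (A + N)" using assms(1) by (simp add: algebra_simps power2_eq_square)
  then have KBC: "K * B * C = A + N" using assms(2) by simp
  then show "N = K * B * C - A" by simp
  show "B^2 + C^2 + N^2 = K * B * C * N" using AN KBC by (simp add: algebra_simps power2_eq_square)
qed

lemma markov_numerator_exchange: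
  fixes x y z Ma Mc Mm Mn Xa Xc Ha Hc Hm :: real
  defines "K \<equiv> (x^2 + y^2 + z^2) / (x * y * z)"
  assumes "0 < x" "0 < y" "0 < z"
    and "0 < Ma" "0 < Mc" "0 < Mm"
    and "Ma * Xa = x * y * z * Ha" "Mc * Xc = x * y * z * Hc" "Mm * (Xa * Xc) = x * y * z * Hm"
    and "Ma^2 + Mc^2 + Mm^2 = K * Ma * Mc * Mm" "Mn = (Mc^2 + Mm^2) / Ma"
  shows "0 < Mn" "Mc^2 + Mm^2 + Mn^2 = K * Mc * Mm * Mn"
    "Mn * (Xa * Xc^2) = x * y * z * ((x^2 + y^2 + z^2) * Hc * Hm - Xc^2 * Ha)"
proof -
  show "0 < Mn" using assms(5-7) by (simp add: assms(12) add_pos_pos)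
  note ex = markov_exchange[OF assms(11) _ assms(12)]
  show "Mc^2 + Mm^2 + Mn^2 = K * Mc * Mm * Mn" using ex(2) assms(5) by simp
  have Mn: "Mn = K * Mc * Mm - Ma" using ex(1) assms(5) by simp
  have "Mn * (Xa * Xc^2) = K * (Mc * Xc) * (Mm * (Xa * Xc)) - (Ma * Xa) * Xc^2"
    unfolding Mn by (simp add: algebra_simps power2_eq_square)
  also have "\<dots> = x * y * z * ((x^2 + y^2 + z^2) * Hc * Hm - Xc^2 * Ha)"
    using assms(2-4) by (simp add: assms(8-10) K_def field_simps power2_eq_square)
  finally show "Mn * (Xa * Xc^2) = x * y * z * ((x^2 + y^2 + z^2) * Hc * Hm - Xc^2 * Ha)" .
qed

lemma represents_mutate:
  assumes ga: "represents a1 a2 Pa" and gc: "represents c1 c2 Pc"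
    and gm: "represents (a1 + c1) (a2 + c2) Pm"
    and pos: "1 \<le> a1 + a2" "1 \<le> c1 + c2"
    and mq: "markov_eq (markovM (a1, a2)) (markovM (c1, c2)) (markovM (a1 + c1, a2 + c2))"
    and rec: "\<And>x y z. markovM (a1 + 2 * c1, a2 + 2 * c2) x y z =
      ((markovM (c1, c2) x y z)^2 + (markovM (a1 + c1, a2 + c2) x y z)^2) / markovM (a1, a2) x y z"
  shows "represents (a1 + 2 * c1) (a2 + 2 * c2) (mutate Pa Pc Pm c1 c2)"
    "markov_eq (markovM (c1, c2)) (markovM (a1 + c1, a2 + c2)) (markovM (a1 + 2 * c1, a2 + 2 * c2))"
proof -
  define na nc nm n where "na = a1 + a2 - 1" "nc = c1 + c2 - 1" "nm = a1 + c1 + (a2 + c2) - 1"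
    "n = a1 + 2 * c1 + (a2 + 2 * c2) - 1"
  have n: "n = 1 + nc + nm" "n = 2 * (c1 + c2) + na" using pos by (auto simp: na_nc_nm_n_def)
  define Xa Xc where "Xa x y z = x^a1 * y^a2 * z^(a1 + a2)" "Xc x y z = x^c1 * y^c2 * z^(c1 + c2)"
    for x y z :: real
  have Xm: "x^(a1 + c1) * y^(a2 + c2) * z^(a1 + c1 + (a2 + c2)) = Xa x y z * Xc x y z"
    and Xn: "x^(a1 + 2 * c1) * y^(a2 + 2 * c2) * z^(a1 + 2 * c1 + (a2 + 2 * c2)) = Xa x y z * (Xc x y z)^2"
    and Xc2: "(Xc x y z)^2 = (x^2)^c1 * (y^2)^c2 * (z^2)^(c1 + c2)" for x y z :: real
    by (simp add: Xa_Xc_def power_add algebra_simps,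
        simp add: Xa_Xc_def power_add power_mult_distrib power2_eq_square algebra_simps power_mult,
        simp add: Xa_Xc_def power_mult_distrib power_mult[symmetric] mult.commute)
  have hyps: "0 < markovM (a1, a2) x y z" "0 < markovM (c1, c2) x y z" "0 < markovM (a1 + c1, a2 + c2) x y z"
    "markovM (a1, a2) x y z * Xa x y z = x * y * z * hpoly na Pa (x^2) (y^2) (z^2)"
    "markovM (c1, c2) x y z * Xc x y z = x * y * z * hpoly nc Pc (x^2) (y^2) (z^2)"
    "markovM (a1 + c1, a2 + c2) x y z * (Xa x y z * Xc x y z) = x * y * z * hpoly nm Pm (x^2) (y^2) (z^2)"
    "(markovM (a1, a2) x y z)^2 + (markovM (c1, c2) x y z)^2 + (markovM (a1 + c1, a2 + c2) x y z)^2 =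
      (x^2 + y^2 + z^2) / (x * y * z) * markovM (a1, a2) x y z * markovM (c1, c2) x y z
      * markovM (a1 + c1, a2 + c2) x y z"
    if "0 < x" "0 < y" "0 < z" for x y z
    using ga gc gm mq that unfolding Xm[symmetric]
    unfolding represents_def markov_eq_def Xa_Xc_def na_nc_nm_n_def by auto
  note ex = markov_numerator_exchange[OF _ _ _ hyps rec]
  have "hpoly n (mutate Pa Pc Pm c1 c2) (x^2) (y^2) (z^2) = (x^2 + y^2 + z^2) * hpoly nc Pc (x^2) (y^2) (z^2)
      * hpoly nm Pm (x^2) (y^2) (z^2) - (Xc x y z)^2 * hpoly na Pa (x^2) (y^2) (z^2)" if "0 < y" for x y z
    using that by (simp add: hpoly_mutate[OF _ n] Xc2)
  moreover have "tdeg_le n (mutate Pa Pc Pm c1 c2)"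
    using ga gc gm by (intro tdeg_le_mutate[OF _ _ _ n]) (auto simp: represents_def na_nc_nm_n_def)
  ultimately show "represents (a1 + 2 * c1) (a2 + 2 * c2) (mutate Pa Pc Pm c1 c2)"
    "markov_eq (markovM (c1, c2)) (markovM (a1 + c1, a2 + c2)) (markovM (a1 + 2 * c1, a2 + 2 * c2))"
    using ex hyps unfolding represents_def markov_eq_def Xn na_nc_nm_n_def(4)[symmetric] by auto
qed

section \<open>The low layers of the numerators\<close>

definition layer1 :: "nat \<Rightarrow> nat \<Rightarrow> real poly" where
  "layer1 p q = [:real p - 1, real q - 1:]"

definition layer2 :: "nat \<Rightarrow> nat \<Rightarrow> real poly" where
  "layer2 p q = [:(real p - 1) * (real p - 2) / 2, real p * real q - 4 * real p + 2,
     (real q - 1) * (real q - 2) / 2:]"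

text \<open>The coefficients of \<open>w^0, w^1, w^2\<close> in the numerator of \<open>M_(p/q)\<close> are \<open>(u + v)^n\<close>,
  \<open>(u + v)^(n-2) layer1\<close> and \<open>(u + v)^(n-4) layer2\<close>, where \<open>n = p + q - 1\<close>; the powers of
  \<open>u + v\<close> are cleared because the exponents are negative for small \<open>p + q\<close>.\<close>

definition low_layers :: "nat \<Rightarrow> nat \<Rightarrow> real poly poly \<Rightarrow> bool" where
  "low_layers p q P \<longleftrightarrow> coeff P 0 = u_plus_v^(p + q - 1) \<and>
     (2 \<le> p + q \<longrightarrow> u_plus_v^2 * coeff P 1 = u_plus_v^(p + q - 1) * layer1 p q) \<and>
     (3 \<le> p + q \<longrightarrow> u_plus_v^4 * coeff P 2 = u_plus_v^(p + q - 1) * layer2 p q)"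

lemma layer1_add: "layer1 (a1 + c1) (a2 + c2) = layer1 a1 a2 + layer1 c1 c2 + u_plus_v"
  by (simp add: layer1_def u_plus_v_def)

lemma layer2_add:
  "layer2 (a1 + c1) (a2 + c2) =
     layer2 a1 a2 + layer2 c1 c2 + layer1 a1 a2 * layer1 c1 c2 + u_plus_v * (layer1 a1 a2 + layer1 c1 c2)"
  by (simp add: layer2_def layer1_def u_plus_v_def algebra_simps field_simps)

lemma coeff_mult_0_1_2:
  "coeff (P * Q) 0 = coeff P 0 * coeff Q 0"
  "coeff (P * Q) 1 = coeff P 0 * coeff Q 1 + coeff P 1 * coeff Q 0"
  "coeff (P * Q) 2 = coeff P 0 * coeff Q 2 + coeff P 1 * coeff Q 1 + coeff P 2 * coeff Q 0"
  by (simp_all add: coeff_mult numeral_2_eq_2 atMost_Suc algebra_simps)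

lemma coeff_u_plus_v_plus_w_mult:
  "coeff (u_plus_v_plus_w * P) 0 = u_plus_v * coeff P 0"
  "coeff (u_plus_v_plus_w * P) (Suc k) = u_plus_v * coeff P (Suc k) + coeff P k"
  by (simp_all add: u_plus_v_plus_w_def mult_pCons_left)

lemma coeff_mono_uw_mult: "coeff (mono_uw i e * P) k = (if k < e then 0 else monom 1 i * coeff P (k - e))"
  by (simp add: mono_uw_def coeff_monom_mult)

lemma coeff_mutate:
  "coeff (mutate Pa Pc Pm c1 c2) 0 = u_plus_v * coeff Pc 0 * coeff Pm 0
     - (if c1 + c2 = 0 then monom 1 c1 * coeff Pa 0 else 0)"
  "coeff (mutate Pa Pc Pm c1 c2) 1 = u_plus_v * coeff (Pc * Pm) 1 + coeff Pc 0 * coeff Pm 0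
     - (if c1 + c2 \<le> 1 then monom 1 c1 * coeff Pa (1 - (c1 + c2)) else 0)"
  "coeff (mutate Pa Pc Pm c1 c2) 2 = u_plus_v * coeff (Pc * Pm) 2 + coeff (Pc * Pm) 1
     - (if c1 + c2 \<le> 2 then monom 1 c1 * coeff Pa (2 - (c1 + c2)) else 0)"
  unfolding mutate_def coeff_diff mult.assoc[of u_plus_v_plus_w] coeff_mono_uw_mult
    numeral_2_eq_2 One_nat_def coeff_u_plus_v_plus_w_mult
  by (simp_all add: coeff_mult_0_1_2[unfolded One_nat_def numeral_2_eq_2])

lemma low_layers_mutate_generic:
  assumes "low_layers c1 c2 Pc" "low_layers m1 m2 Pm" "3 \<le> c1 + c2" "3 \<le> m1 + m2"
  shows "low_layers (m1 + c1) (m2 + c2) (mutate Pa Pc Pm c1 c2)"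
proof -
  define s nc nm where "s = u_plus_v" "nc = c1 + c2 - 1" "nm = m1 + m2 - 1"
  have n: "m1 + c1 + (m2 + c2) - 1 = nc + nm + 1" using assms(3,4) by (simp add: s_nc_nm_def)
  have C: "coeff Pc 0 = s^nc" "s^2 * coeff Pc 1 = s^nc * layer1 c1 c2" "s^4 * coeff Pc 2 = s^nc * layer2 c1 c2"
    using assms(1,3) by (auto simp: low_layers_def s_nc_nm_def)
  have D: "coeff Pm 0 = s^nm" "s^2 * coeff Pm 1 = s^nm * layer1 m1 m2" "s^4 * coeff Pm 2 = s^nm * layer2 m1 m2"
    using assms(2,4) by (auto simp: low_layers_def s_nc_nm_def)
  have small: "\<not> c1 + c2 \<le> 2" "\<not> c1 + c2 \<le> 1" "c1 + c2 \<noteq> 0" using assms(3) by auto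
  note co = coeff_mutate[of Pa Pc Pm c1 c2, folded s_nc_nm_def(1), unfolded coeff_mult_0_1_2]
  have "s^2 * coeff (mutate Pa Pc Pm c1 c2) 1
      = s * coeff Pc 0 * (s^2 * coeff Pm 1) + s * (s^2 * coeff Pc 1) * coeff Pm 0 + s^2 * coeff Pc 0 * coeff Pm 0"
    unfolding co using small by (simp add: algebra_simps power2_eq_square)
  also have "\<dots> = s^(nc + nm + 1) * (layer1 c1 c2 + layer1 m1 m2 + s)"
    unfolding C D by (simp add: power_add algebra_simps power2_eq_square)
  finally have N1: "s^2 * coeff (mutate Pa Pc Pm c1 c2) 1 = s^(nc + nm + 1) * layer1 (m1 + c1) (m2 + c2)"
    by (simp add: layer1_add s_nc_nm_def add.commute)
  have "s^4 * coeff (mutate Pa Pc Pm c1 c2) 2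
      = s * coeff Pc 0 * (s^4 * coeff Pm 2) + s * (s^2 * coeff Pc 1) * (s^2 * coeff Pm 1)
        + s * (s^4 * coeff Pc 2) * coeff Pm 0
        + s^2 * coeff Pc 0 * (s^2 * coeff Pm 1) + s^2 * (s^2 * coeff Pc 1) * coeff Pm 0"
    unfolding co using small by (simp add: algebra_simps power2_eq_square power4_eq_xxxx)
  also have "\<dots> = s^(nc + nm + 1) * (layer2 c1 c2 + layer2 m1 m2 + layer1 c1 c2 * layer1 m1 m2
      + s * (layer1 c1 c2 + layer1 m1 m2))"
    unfolding C D by (simp add: power_add algebra_simps power2_eq_square)
  finally have N2: "s^4 * coeff (mutate Pa Pc Pm c1 c2) 2 = s^(nc + nm + 1) * layer2 (m1 + c1) (m2 + c2)"
    by (simp add: layer2_add s_nc_nm_def algebra_simps)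
  have N0: "coeff (mutate Pa Pc Pm c1 c2) 0 = s^(nc + nm + 1)"
    unfolding co C D using small by (simp add: power_add)
  show ?thesis unfolding low_layers_def n using N0 N1 N2 by (simp add: s_nc_nm_def)
qed

text \<open>When \<open>c = 0/1\<close> or \<open>c = 1/1\<close>, the monomial \<open>u^c1 v^c2 w^(c1+c2)\<close> of the mutation
  reaches the low layers.\<close>

lemma low_layers_mutate_0_1:
  assumes "low_layers 0 1 Pc" "tdeg_le 0 Pc" "low_layers 1 k Pa" "low_layers 1 (k + 1) Pm" "1 \<le> k"
  shows "low_layers 1 (k + 2) (mutate Pa Pc Pm 0 1)"
proof -
  define s where "s = u_plus_v"
  have C: "coeff Pc 0 = 1" "coeff Pc 1 = 0" "coeff Pc 2 = 0"
    using assms(1) tdeg_le_coeff_eq_0'[OF assms(2)] by (auto simp: low_layers_def)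
  have A: "coeff Pa 0 = s^k" "s^2 * coeff Pa 1 = s^k * layer1 1 k"
    using assms(3,5) by (auto simp: low_layers_def s_def)
  have D: "coeff Pm 0 = s^(k + 1)" "s^2 * coeff Pm 1 = s^(k + 1) * layer1 1 (k + 1)"
    "s^4 * coeff Pm 2 = s^(k + 1) * layer2 1 (k + 1)"
    using assms(4,5) by (auto simp: low_layers_def s_def)
  note co = coeff_mutate[of Pa Pc Pm 0 1, folded s_def, unfolded coeff_mult_0_1_2 C]
  have "s^2 * coeff (mutate Pa Pc Pm 0 1) 1 = s * (s^2 * coeff Pm 1) + s^2 * coeff Pm 0 - s^2 * coeff Pa 0"
    unfolding co by (simp add: algebra_simps)
  also have "\<dots> = s^(k + 2) * (layer1 1 (k + 1) + s - 1)"
    unfolding A D by (simp add: algebra_simps power2_eq_square)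
  also have "layer1 1 (k + 1) + s - 1 = layer1 1 (k + 2)"
    by (simp add: layer1_def s_def u_plus_v_def one_pCons)
  finally have N1: "s^2 * coeff (mutate Pa Pc Pm 0 1) 1 = s^(k + 2) * layer1 1 (k + 2)" .
  have "s^4 * coeff (mutate Pa Pc Pm 0 1) 2 = s * (s^4 * coeff Pm 2) + s^2 * (s^2 * coeff Pm 1) - s^2 * (s^2 * coeff Pa 1)"
    unfolding co by (simp add: algebra_simps power4_eq_xxxx power2_eq_square)
  also have "\<dots> = s^(k + 2) * (layer2 1 (k + 1) + s * layer1 1 (k + 1) - layer1 1 k)"
    unfolding A D by (simp add: algebra_simps power2_eq_square)
  also have "layer2 1 (k + 1) + s * layer1 1 (k + 1) - layer1 1 k = layer2 1 (k + 2)"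
    by (simp add: layer2_def layer1_def s_def u_plus_v_def algebra_simps field_simps)
  finally have N2: "s^4 * coeff (mutate Pa Pc Pm 0 1) 2 = s^(k + 2) * layer2 1 (k + 2)" .
  have N0: "coeff (mutate Pa Pc Pm 0 1) 0 = s^(k + 2)"
    unfolding co D by simp
  show ?thesis unfolding low_layers_def using N0 N1 N2 by (simp add: s_def)
qed

lemma low_layers_mutate_1_1:
  assumes "low_layers 1 1 Pc" "tdeg_le 1 Pc" "low_layers m (m + 1) Pa" "low_layers (m + 1) (m + 2) Pm"
  shows "low_layers (m + 2) (m + 3) (mutate Pa Pc Pm 1 1)"
proof -
  define s where "s = u_plus_v"
  have "s^2 * coeff Pc 1 = 0" using assms(1) by (simp add: low_layers_def layer1_def s_def)
  then have C: "coeff Pc 0 = s" "coeff Pc 1 = 0" "coeff Pc 2 = 0"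
    using assms(1) tdeg_le_coeff_eq_0'[OF assms(2)] by (auto simp: low_layers_def s_def)
  have A: "coeff Pa 0 = s^(2 * m)"
    using assms(3) by (simp add: low_layers_def mult_2 s_def)
  have D: "coeff Pm 0 = s^(2 * m + 2)" "s^2 * coeff Pm 1 = s^(2 * m + 2) * layer1 (m + 1) (m + 2)"
    "s^4 * coeff Pm 2 = s^(2 * m + 2) * layer2 (m + 1) (m + 2)"
    using assms(4) by (auto simp: low_layers_def mult_2 s_def)
  note co = coeff_mutate[of Pa Pc Pm 1 1, folded s_def, unfolded coeff_mult_0_1_2 C]
  have "s^2 * coeff (mutate Pa Pc Pm 1 1) 1 = s^2 * (s^2 * coeff Pm 1) + s^3 * coeff Pm 0"
    unfolding co by (simp add: algebra_simps power2_eq_square power3_eq_cube)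
  also have "\<dots> = s^(2 * m + 4) * (layer1 (m + 1) (m + 2) + s)"
    unfolding D by (simp add: algebra_simps power2_eq_square power3_eq_cube power_add power4_eq_xxxx)
  also have "layer1 (m + 1) (m + 2) + s = layer1 (m + 2) (m + 3)"
    by (simp add: layer1_def s_def u_plus_v_def)
  finally have N1: "s^2 * coeff (mutate Pa Pc Pm 1 1) 1 = s^(2 * m + 4) * layer1 (m + 2) (m + 3)" .
  have "s^4 * coeff (mutate Pa Pc Pm 1 1) 2
      = s^2 * (s^4 * coeff Pm 2) + s^3 * (s^2 * coeff Pm 1) - s^4 * monom 1 1 * coeff Pa 0"
    unfolding co by (simp add: algebra_simps power4_eq_xxxx power2_eq_square power3_eq_cube)
  also have "\<dots> = s^(2 * m + 4) * (layer2 (m + 1) (m + 2) + s * layer1 (m + 1) (m + 2) - monom 1 1)"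
    unfolding A D by (simp add: algebra_simps power2_eq_square power3_eq_cube power4_eq_xxxx power_add)
  also have "layer2 (m + 1) (m + 2) + s * layer1 (m + 1) (m + 2) - monom 1 1 = layer2 (m + 2) (m + 3)"
    by (simp add: layer2_def layer1_def s_def u_plus_v_def algebra_simps field_simps monom_altdef)
  finally have N2: "s^4 * coeff (mutate Pa Pc Pm 1 1) 2 = s^(2 * m + 4) * layer2 (m + 2) (m + 3)" .
  have N0: "coeff (mutate Pa Pc Pm 1 1) 0 = s^(2 * m + 4)"
    unfolding co D by (simp add: power_add power2_eq_square power4_eq_xxxx)
  have n: "m + 2 + (m + 3) - 1 = 2 * m + 4" by simp
  show ?thesis unfolding low_layers_def n using N0 N1 N2 by (simp add: s_def)
qed

lemma low_layers_mutate:
  assumes "low_layers a1 a2 Pa" "low_layers c1 c2 Pc" "low_layers (a1 + c1) (a2 + c2) Pm"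
    "tdeg_le (c1 + c2 - 1) Pc" "frac_dom (a1, a2)" "frac_dom (c1, c2)"
    "\<bar>int a1 * int c2 - int a2 * int c1\<bar> = 1" "(a1, a2) \<noteq> (1, 0)" "(c1, c2) \<noteq> (1, 0)"
  shows "low_layers (a1 + 2 * c1) (a2 + 2 * c2) (mutate Pa Pc Pm c1 c2)"
proof -
  have a: "1 \<le> a2" "a1 \<le> a2" and c: "c1 \<le> c2" "1 \<le> c2"
    using assms(5,6,8,9) by (auto simp: frac_dom_def)
  consider "(c1, c2) = (0, 1)" | "(c1, c2) = (1, 1)" | "3 \<le> c1 + c2"
    using c assms(6) frac_dom_0_left_iff by (cases "c1 = 0"; cases "c2 = 1") auto
  then show ?thesis
  proof cases
    case 1
    then have "a1 = 1" using assms(7) by simp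
    then show ?thesis
      using low_layers_mutate_0_1[of Pc a2 Pa Pm] assms(1-4) 1 a by (simp add: add.commute)
  next
    case 2
    then have "a2 = a1 + 1" using assms(7) a by (simp add: abs_if split: if_splits)
    then show ?thesis
      using low_layers_mutate_1_1[of Pc a1 Pa Pm] assms(1-4) 2 by (simp add: add.commute numeral_3_eq_3)
  next
    case 3
    then show ?thesis
      using low_layers_mutate_generic[OF assms(2,3) 3] by (simp add: add.assoc mult_2 add.left_commute)
  qed
qed

section \<open>Induction along the Stern--Brocot tree\<close>

definition layered_numerator :: "nat \<Rightarrow> nat \<Rightarrow> real poly poly \<Rightarrow> bool" where
  "layered_numerator p q P \<longleftrightarrow> represents p q P \<and> low_layers p q P"

lemma layered_numerator_mutate:
  assumes "layered_numerator a1 a2 Pa" "layered_numerator c1 c2 Pc" "layered_numerator (a1 + c1) (a2 + c2) Pm"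
    and "markov_eq (markovM (a1, a2)) (markovM (c1, c2)) (markovM (a1 + c1, a2 + c2))"
    and "frac_dom (a1, a2)" "frac_dom (c1, c2)" "\<bar>int a1 * int c2 - int a2 * int c1\<bar> = 1"
    and "a1 + 2 * c1 \<le> a2 + 2 * c2" "(a1, a2) \<noteq> (1, 0)"
  shows "layered_numerator (a1 + 2 * c1) (a2 + 2 * c2) (mutate Pa Pc Pm c1 c2)"
    "markov_eq (markovM (c1, c2)) (markovM (a1 + c1, a2 + c2)) (markovM (a1 + 2 * c1, a2 + 2 * c2))"
proof -
  have pos: "1 \<le> a1 + a2" "1 \<le> c1 + c2" using assms(5,6) by (auto simp: frac_dom_def)
  have c: "(c1, c2) \<noteq> (1, 0)"
  proof
    assume "(c1, c2) = (1, 0)"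
    then show False using assms(7,8) by simp
  qed
  have R: "represents a1 a2 Pa" "represents c1 c2 Pc" "represents (a1 + c1) (a2 + c2) Pm"
    and L: "low_layers a1 a2 Pa" "low_layers c1 c2 Pc" "low_layers (a1 + c1) (a2 + c2) Pm"
    using assms(1-3) by (simp_all add: layered_numerator_def)
  note rep = represents_mutate[OF R pos assms(4) markovM_rec[OF assms(5-8)]]
  show "markov_eq (markovM (c1, c2)) (markovM (a1 + c1, a2 + c2)) (markovM (a1 + 2 * c1, a2 + 2 * c2))"
    by (rule rep(2))
  have "tdeg_le (c1 + c2 - 1) Pc" using R(2) by (simp add: represents_def)
  then show "layered_numerator (a1 + 2 * c1) (a2 + 2 * c2) (mutate Pa Pc Pm c1 c2)"
    using rep(1) low_layers_mutate[OF L _ assms(5-7,9) c] by (simp add: layered_numerator_def)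
qed

lemma layered_numerator_base:
  "layered_numerator 1 0 1" "layered_numerator 0 1 1" "layered_numerator 1 1 [:u_plus_v:]"
proof -
  have "hpoly 1 [:u_plus_v:] (x^2) (y^2) (z^2) = x^2 + y^2" if "0 < y" for x y z :: real
    using that by (simp add: hpoly_def poly2_def u_plus_v_def field_simps)
  moreover have "tdeg_le 1 [:u_plus_v:]"
    unfolding tdeg_le_def u_plus_v_def by (auto simp: coeff_pCons split: nat.splits if_splits)
  ultimately show "layered_numerator 1 1 [:u_plus_v:]"
    by (auto simp: layered_numerator_def represents_def low_layers_def layer1_def
        markovM_base[unfolded One_nat_def] add_pos_pos field_simps power2_eq_square)
qed (auto simp: layered_numerator_def represents_def low_layers_def markovM_base[unfolded One_nat_def]
    tdeg_le_1 hpoly_1)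

lemma markov_eq_base: "markov_eq (markovM (1, 0)) (markovM (0, 1)) (markovM (1, 1))"
  unfolding markov_eq_def markovM_base by (auto simp: field_simps power2_eq_square)

definition layered_triple :: "nat \<Rightarrow> nat \<Rightarrow> nat \<Rightarrow> nat \<Rightarrow> bool" where
  "layered_triple l1 l2 r1 r2 \<longleftrightarrow> (\<exists>PL PR PS. layered_numerator l1 l2 PL \<and> layered_numerator r1 r2 PR \<and>
     layered_numerator (l1 + r1) (l2 + r2) PS \<and>
     markov_eq (markovM (l1, l2)) (markovM (r1, r2)) (markovM (l1 + r1, l2 + r2)))"

lemma layered_triple_0_1_1_1: "layered_triple 0 1 1 1"
proof -
  define P12 where "P12 = mutate 1 1 [:u_plus_v:] 0 1"
  have rec: "markovM (1 + 2 * 0, 0 + 2 * 1) x y z =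
      ((markovM (0, 1) x y z)^2 + (markovM (1 + 0, 0 + 1) x y z)^2) / markovM (1, 0) x y z" for x y z
    by (rule markovM_rec) (auto simp: frac_dom_def)
  have "represents 1 0 1" "represents 0 1 1" "represents (1 + 0) (0 + 1) [:u_plus_v:]"
    "markov_eq (markovM (1, 0)) (markovM (0, 1)) (markovM (1 + 0, 0 + 1))"
    using layered_numerator_base markov_eq_base by (simp_all add: layered_numerator_def)
  note rep = represents_mutate[OF this(1-3) _ _ this(4) rec]
  have "low_layers 1 2 P12"
    unfolding low_layers_def P12_def coeff_mutate
    by (simp add: coeff_mult_0_1_2 u_plus_v_def layer1_def layer2_def one_pCons power2_eq_square
        numeral_2_eq_2)
  then have "layered_numerator 1 2 P12"
    using rep(1) rec layered_numerator_base by (simp add: layered_numerator_def P12_def numeral_2_eq_2)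
  moreover have "markov_eq (markovM (0, 1)) (markovM (1, 1)) (markovM (1, 2))"
    using rep(2) rec layered_numerator_base by (simp add: layered_numerator_def numeral_2_eq_2)
  ultimately show ?thesis
    using layered_numerator_base unfolding layered_triple_def by (auto simp: numeral_2_eq_2)
qed

lemma layered_triple_farey_pair: "farey_pair l1 l2 r1 r2 \<Longrightarrow> layered_triple l1 l2 r1 r2"
proof (induction "l1 + l2 + r1 + r2" arbitrary: l1 l2 r1 r2 rule: less_induct)
  case less
  note f = less.prems
  have b: "l1 < l2" "1 \<le> r1" "1 \<le> l2" "r1 \<le> r2" using farey_pair_bounds[OF f] f by (auto simp: farey_pair_def)
  from farey_pair_cases[OF f] show ?case
  proof (elim disjE conjE)
    assume "(l1, l2, r1, r2) = (0, 1, 1, 1)"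
    then show ?thesis using layered_triple_0_1_1_1 by simp
  next
    \<comment> \<open>\<open>l + r = (r - l) + 2 l\<close> is the mutation of the parent triple \<open>(l, r - l, r)\<close>.\<close>
    assume h: "l1 \<le> r1" "l2 \<le> r2" and f': "farey_pair l1 l2 (r1 - l1) (r2 - l2)"
    have "layered_triple l1 l2 (r1 - l1) (r2 - l2)" using less.hyps f' h b by simp
    then obtain PL PA PR where g: "layered_numerator l1 l2 PL" "layered_numerator (r1 - l1) (r2 - l2) PA"
      "layered_numerator (r1 - l1 + l1) (r2 - l2 + l2) PR"
      and mq: "markov_eq (markovM (r1 - l1, r2 - l2)) (markovM (l1, l2)) (markovM (r1 - l1 + l1, r2 - l2 + l2))"
      unfolding layered_triple_def by (auto simp: add.commute dest: markov_eq_commute)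
    have "(r1 - l1, r2 - l2) \<noteq> (1, 0)" using farey_pair_bounds[OF f'] f' by (auto simp: farey_pair_def)
    note mut = layered_numerator_mutate[OF g(2,1,3) mq farey_pair_frac_dom(2,1)[OF f']]
    have "layered_numerator (l1 + r1) (l2 + r2) (mutate PA PL PR l1 l2)"
      "markov_eq (markovM (l1, l2)) (markovM (r1, r2)) (markovM (l1 + r1, l2 + r2))"
      using mut farey_pair_int[OF f'] h b \<open>(r1 - l1, r2 - l2) \<noteq> (1, 0)\<close> by (simp_all add: algebra_simps)
    then show ?thesis using g h unfolding layered_triple_def by (auto simp: add.commute)
  next
    \<comment> \<open>\<open>l + r = (l - r) + 2 r\<close> is the mutation of the parent triple \<open>(l - r, r, l)\<close>.\<close>
    assume h: "r1 \<le> l1" "r2 \<le> l2" and f': "farey_pair (l1 - r1) (l2 - r2) r1 r2"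
    have "layered_triple (l1 - r1) (l2 - r2) r1 r2" using less.hyps f' h b by simp
    then obtain PB PR PL where g: "layered_numerator (l1 - r1) (l2 - r2) PB" "layered_numerator r1 r2 PR"
      "layered_numerator (l1 - r1 + r1) (l2 - r2 + r2) PL"
      and mq: "markov_eq (markovM (l1 - r1, l2 - r2)) (markovM (r1, r2)) (markovM (l1 - r1 + r1, l2 - r2 + r2))"
      unfolding layered_triple_def by auto
    have "(l1 - r1, l2 - r2) \<noteq> (1, 0)" using farey_pair_bounds(1)[OF f'] by auto
    note mut = layered_numerator_mutate[OF g mq farey_pair_frac_dom(1,2)[OF f']]
    have "layered_numerator (l1 + r1) (l2 + r2) (mutate PB PR PL r1 r2)"
      "markov_eq (markovM (r1, r2)) (markovM (l1, l2)) (markovM (l1 + r1, l2 + r2))"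
      using mut farey_pair_int[OF f'] h b \<open>(l1 - r1, l2 - r2) \<noteq> (1, 0)\<close> by (simp_all add: algebra_simps)
    then show ?thesis using g h unfolding layered_triple_def by (auto dest: markov_eq_commute)
  qed
qed

lemma layered_numerator_exists:
  assumes "coprime a b" "1 \<le> a" "a < b"
  shows "\<exists>P. layered_numerator a b P"
  using farey_pair_exists[OF assms] layered_triple_farey_pair unfolding layered_triple_def by blast

section \<open>The coefficients \<open>A\<^sub>i\<^sub>j\<close>\<close>

lemma poly_eq_sum_atMost:
  fixes x :: "'a::{comm_semiring_0,semiring_1}"
  assumes "degree p \<le> m"
  shows "poly p x = (\<Sum>i\<le>m. coeff p i * x^i)"
  unfolding poly_altdef using assms
  by (intro sum.mono_neutral_left) (auto simp: coeff_eq_0)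

lemma sum_atMost_rev: "(\<Sum>j\<le>m. f (m - j)) = (\<Sum>j\<le>(m::nat). f j)"
  by (rule sum.reindex_bij_witness[of _ "\<lambda>j. m - j" "\<lambda>j. m - j"]) auto

lemma poly2_eq_sum:
  assumes "tdeg_le n P"
  shows "poly2 P u w = (\<Sum>k\<le>n. \<Sum>i\<le>n. coeff (coeff P k) i * u^i * w^k)"
proof -
  have "poly2 P u w = (\<Sum>k\<le>n. poly (coeff P k) u * w^k)"
    unfolding poly2_def poly_eq_sum_atMost[OF tdeg_le_degree(1)[OF assms]]
    by (simp add: poly_sum poly_power)
  also have "\<dots> = (\<Sum>k\<le>n. \<Sum>i\<le>n. coeff (coeff P k) i * u^i * w^k)"
    by (simp add: poly_eq_sum_atMost[OF tdeg_le_degree(2)[OF assms]] sum_distrib_right)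
  finally show ?thesis .
qed

lemma hpoly_eq_sum:
  assumes "tdeg_le n P" "v \<noteq> 0"
  shows "hpoly n P u v w = (\<Sum>i\<le>n. \<Sum>j\<le>n - i. coeff (coeff P (n - i - j)) i * u^i * v^j * w^(n - i - j))"
proof -
  define T where "T k i = coeff (coeff P k) i * u^i * v^(n - i - k) * w^k" for k i
  have "hpoly n P u v w = (\<Sum>k\<le>n. \<Sum>i\<le>n. v^n * (coeff (coeff P k) i * (u / v)^i * (w / v)^k))"
    by (simp add: hpoly_def poly2_eq_sum[OF assms(1)] sum_distrib_left)
  also have "\<dots> = (\<Sum>k\<le>n. \<Sum>i\<le>n. T k i)"
  proof (intro sum.cong refl)
    fix k i
    show "v^n * (coeff (coeff P k) i * (u / v)^i * (w / v)^k) = T k i"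
    proof (cases "i + k \<le> n")
      case True
      then have "v^n = v^(n - i - k) * v^i * v^k" by (simp add: power_add[symmetric])
      then show ?thesis using assms(2) by (simp add: T_def power_divide field_simps)
    qed (simp add: T_def tdeg_le_coeff_eq_0[OF assms(1)])
  qed
  also have "\<dots> = (\<Sum>i\<le>n. \<Sum>k\<le>n. T k i)" by (rule sum.swap)
  also have "\<dots> = (\<Sum>i\<le>n. \<Sum>k\<le>n - i. T k i)"
    by (intro sum.cong refl sum.mono_neutral_right) (auto simp: T_def tdeg_le_coeff_eq_0[OF assms(1)])
  also have "\<dots> = (\<Sum>i\<le>n. \<Sum>j\<le>n - i. T (n - i - j) i)"
    by (rule sum.cong[OF refl], rule sum_atMost_rev[symmetric])
  also have "\<dots> = (\<Sum>i\<le>n. \<Sum>j\<le>n - i. coeff (coeff P (n - i - j)) i * u^i * v^j * w^(n - i - j))"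
    by (intro sum.cong refl) (auto simp: T_def)
  finally show ?thesis .
qed

lemma polyfun_eq_0_on_pos:
  fixes c :: "nat \<Rightarrow> real"
  assumes "\<And>x. 0 < x \<Longrightarrow> (\<Sum>i\<le>n. c i * x^i) = 0" "i \<le> n"
  shows "c i = 0"
proof (rule ccontr)
  assume "c i \<noteq> 0"
  then have "finite {x. (\<Sum>i\<le>n. c i * x^i) = 0}" using polyfun_finite_roots assms(2) by blast
  moreover have "{0<..} \<subseteq> {x. (\<Sum>i\<le>n. c i * x^i) = 0}" using assms(1) by auto
  ultimately show False using infinite_Ioi finite_subset by blast
qed

lemma homogeneous_coeffs_unique:
  fixes A B :: "nat \<Rightarrow> nat \<Rightarrow> real"
  assumes eq: "\<And>u w. 0 < u \<Longrightarrow> 0 < w \<Longrightarrow>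
      (\<Sum>i\<le>n. \<Sum>j\<le>n - i. A i j * u^i * w^(n - i - j)) = (\<Sum>i\<le>n. \<Sum>j\<le>n - i. B i j * u^i * w^(n - i - j))"
    and ij: "i + j \<le> n"
  shows "A i j = B i j"
proof -
  define D where "D i k = A i (n - i - k) - B i (n - i - k)" for i k
  have "(\<Sum>i\<le>n. (\<Sum>k\<le>n - i. D i k * w^k) * u^i) = 0" if "0 < u" "0 < w" for u w
  proof -
    have "(\<Sum>k\<le>n - i. D i k * w^k) = (\<Sum>j\<le>n - i. (A i j - B i j) * w^(n - i - j))" if "i \<le> n" for i
      using sum_atMost_rev[of "\<lambda>k. D i k * w^k" "n - i"] that by (auto simp: D_def intro!: sum.cong)
    then have "(\<Sum>i\<le>n. (\<Sum>k\<le>n - i. D i k * w^k) * u^i) =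
        (\<Sum>i\<le>n. (\<Sum>j\<le>n - i. (A i j - B i j) * w^(n - i - j)) * u^i)"
      by (intro sum.cong refl) simp
    also have "\<dots> = (\<Sum>i\<le>n. \<Sum>j\<le>n - i. A i j * u^i * w^(n - i - j))
        - (\<Sum>i\<le>n. \<Sum>j\<le>n - i. B i j * u^i * w^(n - i - j))"
      by (simp add: left_diff_distrib right_diff_distrib sum_subtractf sum_distrib_left sum_distrib_right mult_ac)
    finally show ?thesis using eq[OF that] by simp
  qed
  then have "(\<Sum>k\<le>n - i. D i k * w^k) = 0" if "0 < w" for w
    using polyfun_eq_0_on_pos[of "\<lambda>i. \<Sum>k\<le>n - i. D i k * w^k" n i] that ij by (simp add: mult.commute)
  then have "D i (n - i - j) = 0"
    using polyfun_eq_0_on_pos[of "D i" "n - i" "n - i - j"] ij by simp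
  then show ?thesis using ij by (simp add: D_def)
qed

lemma Pcoeff_eqI:
  fixes a b :: nat and A :: "nat \<Rightarrow> nat \<Rightarrow> real"
  defines "S \<equiv> \<lambda>C x y z. \<Sum>i\<le>a + b - 1. \<Sum>j\<le>a + b - 1 - i.
    C i j * (x^2)^i * (y^2)^j * (z^2)^(a + b - 1 - i - j) :: real"
  assumes zero: "\<forall>i j. a + b - 1 < i + j \<longrightarrow> A i j = 0"
    and rep: "\<forall>x y z :: real. x > 0 \<longrightarrow> y > 0 \<longrightarrow> z > 0 \<longrightarrow>
      markovM (a, b) x y z = S A x y z / (x^(a - 1) * y^(b - 1) * z^(a + b - 1))"
  shows "Pcoeff a b = A"
proof -
  have S: "S C x y z = (\<Sum>i\<le>a + b - 1. \<Sum>j\<le>a + b - 1 - i.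
    C i j * (x^2)^i * (y^2)^j * (z^2)^(a + b - 1 - i - j))" for C x y z
    by (simp add: S_def)
  have "B = A" if B: "(\<forall>i j. a + b - 1 < i + j \<longrightarrow> B i j = 0) \<and> (\<forall>x y z :: real. x > 0 \<longrightarrow> y > 0 \<longrightarrow> z > 0 \<longrightarrow>
      markovM (a, b) x y z = S B x y z / (x^(a - 1) * y^(b - 1) * z^(a + b - 1)))" for B
  proof -
    define n where "n = a + b - 1"
    have "S B x 1 z = S A x 1 z" if "0 < x" "0 < z" for x z
    proof -
      have "markovM (a, b) x 1 z = S B x 1 z / (x^(a - 1) * z^(a + b - 1))"
        using conjunct2[OF B] that by simp
      moreover have "markovM (a, b) x 1 z = S A x 1 z / (x^(a - 1) * z^(a + b - 1))"
        using rep that by simp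
      ultimately show ?thesis using that by simp
    qed
    from this[of "sqrt u" "sqrt w" for u w]
    have "(\<Sum>i\<le>n. \<Sum>j\<le>n - i. B i j * u^i * w^(n - i - j)) = (\<Sum>i\<le>n. \<Sum>j\<le>n - i. A i j * u^i * w^(n - i - j))"
      if "0 < u" "0 < w" for u w
      using that by (simp add: S_def n_def)
    then have "B i j = A i j" if "i + j \<le> n" for i j
      by (rule homogeneous_coeffs_unique[OF _ that])
    moreover have "B i j = A i j" if "\<not> i + j \<le> n" for i j
      using that zero B by (simp add: n_def)
    ultimately show "B = A" by (intro ext) blast
  qed
  then show ?thesis
    unfolding Pcoeff_def S[symmetric] by (intro the_equality) (use zero rep in blast)+
qed

definition numerator_coeff :: "nat \<Rightarrow> real poly poly \<Rightarrow> nat \<Rightarrow> nat \<Rightarrow> real" where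
  "numerator_coeff n P i j = (if i + j \<le> n then coeff (coeff P (n - i - j)) i else 0)"

lemma Pcoeff_eq_numerator_coeff:
  assumes "represents a b P" "1 \<le> a" "1 \<le> b"
  shows "Pcoeff a b = numerator_coeff (a + b - 1) P"
proof (rule Pcoeff_eqI)
  define n where "n = a + b - 1"
  show "\<forall>i j. a + b - 1 < i + j \<longrightarrow> numerator_coeff (a + b - 1) P i j = 0"
    by (simp add: numerator_coeff_def)
  show "\<forall>x y z :: real. x > 0 \<longrightarrow> y > 0 \<longrightarrow> z > 0 \<longrightarrow> markovM (a, b) x y z =
      (\<Sum>i\<le>a + b - 1. \<Sum>j\<le>a + b - 1 - i.
         numerator_coeff (a + b - 1) P i j * (x^2)^i * (y^2)^j * (z^2)^(a + b - 1 - i - j))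
      / (x^(a - 1) * y^(b - 1) * z^(a + b - 1))"
  proof (intro allI impI)
    fix x y z :: real assume xyz: "0 < x" "0 < y" "0 < z"
    define D where "D = x^(a - 1) * y^(b - 1) * z^n"
    have "x^a * y^b * z^(a + b) = (x * y * z) * D"
      using assms(2,3) by (simp add: D_def n_def power_eq_if algebra_simps)
    moreover have "hpoly n P (x^2) (y^2) (z^2) = (\<Sum>i\<le>n. \<Sum>j\<le>n - i.
        numerator_coeff n P i j * (x^2)^i * (y^2)^j * (z^2)^(n - i - j))"
      using xyz assms(1) unfolding represents_def n_def[symmetric]
      by (simp add: hpoly_eq_sum) (auto simp: numerator_coeff_def intro!: sum.cong)
    moreover have "markovM (a, b) x y z * (x^a * y^b * z^(a + b)) = x * y * z * hpoly n P (x^2) (y^2) (z^2)"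
      using assms(1) xyz unfolding represents_def n_def by blast
    ultimately have "(x * y * z) * (markovM (a, b) x y z * D) = (x * y * z) * (\<Sum>i\<le>n. \<Sum>j\<le>n - i.
        numerator_coeff n P i j * (x^2)^i * (y^2)^j * (z^2)^(n - i - j))"
      by (simp add: ac_simps)
    moreover have "D > 0" using xyz by (simp add: D_def)
    ultimately show "markovM (a, b) x y z = (\<Sum>i\<le>a + b - 1. \<Sum>j\<le>a + b - 1 - i.
         numerator_coeff (a + b - 1) P i j * (x^2)^i * (y^2)^j * (z^2)^(a + b - 1 - i - j))
      / (x^(a - 1) * y^(b - 1) * z^(a + b - 1))"
      using xyz by (simp add: D_def n_def field_simps)
  qed
qed

section \<open>Log-concavity\<close>

definition log_concave_seq :: "(int \<Rightarrow> real) \<Rightarrow> bool" where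
  "log_concave_seq f \<longleftrightarrow> (\<forall>i. 0 \<le> f i) \<and> (\<forall>i. f (i - 1) * f (i + 1) \<le> (f i)^2) \<and>
     (\<forall>i j k. i < j \<longrightarrow> j < k \<longrightarrow> 0 < f i \<longrightarrow> 0 < f k \<longrightarrow> 0 < f j)"

lemma log_concave_seq_cross:
  assumes "log_concave_seq f"
  shows "f (i - 2) * f (i + 1) \<le> f i * f (i - 1)"
proof -
  have f0: "0 \<le> f i" for i using assms by (simp add: log_concave_seq_def)
  have fl: "f (i - 1) * f (i + 1) \<le> (f i)^2" for i using assms by (simp add: log_concave_seq_def)
  have fn: "i < j \<Longrightarrow> j < k \<Longrightarrow> 0 < f i \<Longrightarrow> 0 < f k \<Longrightarrow> 0 < f j" for i j k
    using assms unfolding log_concave_seq_def by blast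
  show ?thesis
  proof (cases "0 < f (i - 2) \<and> 0 < f (i + 1)")
    case False
    then have "f (i - 2) * f (i + 1) = 0" using f0[of "i - 2"] f0[of "i + 1"] by auto
    then show ?thesis using mult_nonneg_nonneg[OF f0[of i] f0[of "i - 1"]] by linarith
  next
    case True
    have pos: "0 < f (i - 1)" "0 < f i" using fn[of "i - 2" _ "i + 1"] True by auto
    have "f (i - 2) * f i \<le> (f (i - 1))^2" using fl[of "i - 1"] by (simp add: algebra_simps)
    then have "(f (i - 2) * f i) * (f (i - 1) * f (i + 1)) \<le> (f (i - 1))^2 * (f i)^2"
      by (rule mult_mono[OF _ fl[of i]]) (use f0 in auto)
    then have "(f (i - 1) * f i) * (f (i - 2) * f (i + 1)) \<le> (f (i - 1) * f i) * (f i * f (i - 1))"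
      by (simp add: algebra_simps power2_eq_square)
    then show ?thesis using pos by (simp add: mult_le_cancel_left_pos)
  qed
qed

lemma shift_combination_no_internal_zeros:
  assumes lc: "log_concave_seq f" and "0 \<le> s" "0 \<le> r" and "i < j" "j < k"
    and "0 < s * f i + r * f (i - 1)" "0 < s * f k + r * f (k - 1)"
  shows "0 < s * f j + r * f (j - 1)"
proof -
  have f0: "0 \<le> f i" for i using lc by (simp add: log_concave_seq_def)
  have fn: "i < j \<Longrightarrow> j < k \<Longrightarrow> 0 < f i \<Longrightarrow> 0 < f k \<Longrightarrow> 0 < f j" for i j k
    using lc unfolding log_concave_seq_def by blast
  have pos: "0 < s \<and> 0 < f t \<or> 0 < r \<and> 0 < f (t - 1)" if "0 < s * f t + r * f (t - 1)" for t
  proof -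
    have "0 < s \<and> 0 < f t \<or> s * f t = 0" "0 < r \<and> 0 < f (t - 1) \<or> r * f (t - 1) = 0"
      using f0[of t] f0[of "t - 1"] assms(2,3) by (auto simp: less_le)
    then show ?thesis using that by auto
  qed
  from pos[OF assms(6)] pos[OF assms(7)]
  have "0 < s \<and> 0 < f j \<or> 0 < r \<and> 0 < f (j - 1)"
  proof (elim disjE conjE)
    assume "0 < s" "0 < f i" "0 < f k"
    then show ?thesis using fn[of i j k] assms(4,5) by auto
  next
    assume "0 < r" "0 < f (i - 1)" "0 < f (k - 1)"
    then show ?thesis using fn[of "i - 1" "j - 1" "k - 1"] assms(4,5) by auto
  next
    assume "0 < s" "0 < f i" "0 < r" "0 < f (k - 1)"
    then show ?thesis using fn[of i j "k - 1"] assms(4,5) by (cases "j = k - 1") auto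
  next
    assume "0 < r" "0 < f (i - 1)" "0 < s" "0 < f k"
    then show ?thesis using fn[of "i - 1" j k] assms(4,5) by auto
  qed
  then show ?thesis using f0[of j] f0[of "j - 1"] assms(2,3)
    by (auto intro: add_pos_nonneg add_nonneg_pos)
qed

lemma log_concave_seq_shift_combination:
  assumes lc: "log_concave_seq f" and "0 \<le> s" "0 \<le> r"
  shows "log_concave_seq (\<lambda>i. s * f i + r * f (i - 1))"
proof -
  define g where "g i = s * f i + r * f (i - 1)" for i
  have f0: "0 \<le> f i" for i using lc by (simp add: log_concave_seq_def)
  have fl: "f (i - 1) * f (i + 1) \<le> (f i)^2" for i using lc by (simp add: log_concave_seq_def)
  have "g (i - 1) * g (i + 1) \<le> (g i)^2" for i
  proof -
    have "(g i)^2 - g (i - 1) * g (i + 1) = s^2 * ((f i)^2 - f (i - 1) * f (i + 1))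
        + r^2 * ((f (i - 1))^2 - f (i - 2) * f i) + r * s * (f i * f (i - 1) - f (i - 2) * f (i + 1))"
      by (simp add: g_def algebra_simps power2_eq_square)
    moreover have "0 \<le> s^2 * ((f i)^2 - f (i - 1) * f (i + 1))" using fl[of i] by simp
    moreover have "0 \<le> r^2 * ((f (i - 1))^2 - f (i - 2) * f i)"
      using fl[of "i - 1"] by (intro mult_nonneg_nonneg) (auto simp: algebra_simps)
    moreover have "0 \<le> r * s * (f i * f (i - 1) - f (i - 2) * f (i + 1))"
      using log_concave_seq_cross[OF lc, of i] assms(2,3) by simp
    ultimately show ?thesis by linarith
  qed
  then show ?thesis
    using f0 assms(2,3) shift_combination_no_internal_zeros[OF assms]
    unfolding log_concave_seq_def g_def by auto
qed

definition icoeff :: "real poly \<Rightarrow> int \<Rightarrow> real" where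
  "icoeff p i = (if 0 \<le> i then coeff p (nat i) else 0)"

lemma icoeff_mult_linear: "icoeff (p * [:s, r:]) i = s * icoeff p i + r * icoeff p (i - 1)"
proof -
  have e: "p * [:s, r:] = smult s p + pCons 0 (smult r p)"
    by (simp add: mult_pCons_right)
  consider "i < 0" | "i = 0" | "0 < i" by linarith
  then show ?thesis
  proof cases
    case 3
    then have "nat i = Suc (nat (i - 1))" by linarith
    then show ?thesis using 3 by (simp add: icoeff_def e)
  qed (simp_all add: icoeff_def e)
qed

lemma log_concave_icoeff_1: "log_concave_seq (icoeff 1)"
  unfolding log_concave_seq_def icoeff_def
  by (auto simp: coeff_1 nat_eq_iff split: if_splits)

lemma log_concave_icoeff_mult_linear:
  "log_concave_seq (icoeff p) \<Longrightarrow> 0 \<le> s \<Longrightarrow> 0 \<le> r \<Longrightarrow> log_concave_seq (icoeff (p * [:s, r:]))"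
  unfolding icoeff_mult_linear by (rule log_concave_seq_shift_combination)

lemma log_concave_icoeff_smult:
  "log_concave_seq (icoeff p) \<Longrightarrow> 0 < c \<Longrightarrow> log_concave_seq (icoeff (smult c p))"
  unfolding log_concave_seq_def icoeff_def
  by (auto simp: power_mult_distrib mult_le_cancel_left_pos zero_less_mult_iff algebra_simps
       power2_eq_square split: if_splits)

lemma log_concave_icoeff_mult_u_plus_v_power:
  "log_concave_seq (icoeff p) \<Longrightarrow> log_concave_seq (icoeff (p * u_plus_v^m))"
proof (induction m)
  case (Suc m)
  have "log_concave_seq (icoeff (p * u_plus_v^m * [:1, 1:]))"
    by (rule log_concave_icoeff_mult_linear[OF Suc.IH[OF Suc.prems]]) simp_all
  then show ?case by (simp add: u_plus_v_def mult_ac)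
qed simp

text \<open>A quadratic with nonnegative coefficients and real roots factors into linear factors with
  nonnegative coefficients.\<close>

lemma log_concave_icoeff_quadratic:
  assumes "0 \<le> \<alpha>" "0 \<le> \<beta>" "0 \<le> \<gamma>" "4 * \<alpha> * \<gamma> \<le> \<beta>^2"
  shows "log_concave_seq (icoeff [:\<gamma>, \<beta>, \<alpha>:])"
proof (cases "\<alpha> = 0")
  case True
  then show ?thesis
    using log_concave_icoeff_mult_linear[OF log_concave_icoeff_1 assms(3,2)] by simp
next
  case False
  then have al: "0 < \<alpha>" using assms(1) by simp
  define D where "D = \<beta>^2 - 4 * \<alpha> * \<gamma>"
  have D0: "0 \<le> D" using assms(4) by (simp add: D_def)
  have "sqrt D \<le> sqrt (\<beta>^2)" using al assms(3) by (intro real_sqrt_le_mono) (simp add: D_def)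
  then have Dle: "sqrt D \<le> \<beta>" using assms(2) by simp
  define r1 r2 where "r1 = (\<beta> - sqrt D) / (2 * \<alpha>)" "r2 = (\<beta> + sqrt D) / (2 * \<alpha>)"
  have r0: "0 \<le> r1" "0 \<le> r2" using Dle al assms(2) D0 by (auto simp: r1_r2_def)
  have "\<alpha> * (r1 * r2) = (\<beta>^2 - sqrt D * sqrt D) / (4 * \<alpha>)"
    using al by (simp add: r1_r2_def field_simps power2_eq_square)
  also have "\<dots> = \<gamma>" using al D0 by (simp add: D_def field_simps)
  finally have "\<alpha> * (r1 * r2) = \<gamma>" .
  moreover have "\<alpha> * (r1 + r2) = \<beta>" using al by (simp add: r1_r2_def field_simps)
  ultimately have "[:\<gamma>, \<beta>, \<alpha>:] = smult \<alpha> (1 * [:r1, 1:] * [:r2, 1:])"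
    by (simp add: algebra_simps)
  then show ?thesis
    by (simp only:) (intro log_concave_icoeff_smult log_concave_icoeff_mult_linear
        log_concave_icoeff_1 al r0 zero_le_one)
qed

text \<open>This is where \<open>5a \<le> 3b\<close> enters: it makes the discriminant of \<open>layer2 a b\<close> nonnegative.\<close>

lemma layer2_discriminant_nonneg:
  fixes a b :: nat
  assumes "1 \<le> a" "5 * a \<le> 3 * b"
  shows "(real a - 1) * (real a - 2) * (real b - 1) * (real b - 2) \<le> (real a * real b - 4 * real a + 2)^2"
proof -
  define t where "t = 3 * real b - 5 * real a"
  have t0: "0 \<le> t" using assms(2) unfolding t_def by linarith
  have key: "9 * ((real a * real b - 4 * real a + 2)^2 - (real a - 1) * (real a - 2) * (real b - 1) * (real b - 2))
      = 15 * (real a)^2 * t + 3 * real a * t^2 + (real a)^2 - 35 * real a * t - 2 * t^2 + 18 * t"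
    by (simp add: t_def field_simps power2_eq_square)
  moreover have E: "0 \<le> 15 * (real a)^2 * t + 3 * real a * t^2 + (real a)^2 - 35 * real a * t - 2 * t^2 + 18 * t"
  proof -
    consider "a = 1" | "a = 2" | "3 \<le> real a" using assms(1) by linarith
    then show ?thesis
    proof cases
      case 1
      then show ?thesis using zero_le_power2[of "t - 1"] by (simp add: power2_eq_square algebra_simps)
    next
      case 2
      then show ?thesis using zero_le_power2[of "t + 1"] by (simp add: power2_eq_square algebra_simps)
    next
      case 3
      have "0 \<le> 5 * real a * t * (3 * real a - 7)" "0 \<le> t^2 * (3 * real a - 2)"
        using 3 t0 by (intro mult_nonneg_nonneg; simp)+
      then have "35 * real a * t \<le> 15 * (real a)^2 * t" "2 * t^2 \<le> 3 * real a * t^2"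
        by (simp_all add: algebra_simps power2_eq_square)
      then show ?thesis using t0 zero_le_power2[of "real a"] by linarith
    qed
  qed
  ultimately have "0 \<le> 9 * ((real a * real b - 4 * real a + 2)^2
      - (real a - 1) * (real a - 2) * (real b - 1) * (real b - 2))"
    by (simp only:)
  then show ?thesis by simp
qed

lemma real_pred_mult_pred2_nonneg: "0 \<le> (real n - 1) * (real n - 2)"
  by (cases "n \<le> 1") (auto intro: mult_nonpos_nonpos mult_nonneg_nonneg)

lemma log_concave_icoeff_layer2:
  assumes "1 \<le> a" "5 * a \<le> 3 * b"
  shows "log_concave_seq (icoeff (layer2 a b))"
  unfolding layer2_def
proof (rule log_concave_icoeff_quadratic)
  consider "4 \<le> b" | "a = 1" "b = 2" | "a = 1" "b = 3" using assms by linarith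
  then have "0 \<le> real a * (real b - 4) + 2" by cases auto
  then show "0 \<le> real a * real b - 4 * real a + 2" by (simp add: algebra_simps)
  show "0 \<le> (real a - 1) * (real a - 2) / 2" "0 \<le> (real b - 1) * (real b - 2) / 2"
    using real_pred_mult_pred2_nonneg[of a] real_pred_mult_pred2_nonneg[of b] by simp_all
  show "4 * ((real b - 1) * (real b - 2) / 2) * ((real a - 1) * (real a - 2) / 2) \<le>
      (real a * real b - 4 * real a + 2)^2"
    using layer2_discriminant_nonneg[OF assms] by (simp add: field_simps)
qed

lemma log_concave_icoeff_second_layer:
  assumes "1 \<le> a" "5 * a \<le> 3 * b" "u_plus_v^4 * Q = u_plus_v^(a + b - 1) * layer2 a b"
  shows "log_concave_seq (icoeff Q)"
proof -
  consider "a = 1" "b = 2" | "a = 1" "b = 3" | "4 \<le> b" using assms(1,2) by linarith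
  then show ?thesis
  proof cases
    case 1
    then have "Q = 0" using assms(3) by (simp add: layer2_def)
    then show ?thesis by (simp add: log_concave_seq_def icoeff_def)
  next
    case 2
    then have "u_plus_v^4 * Q = u_plus_v^4 * (1 * [:0, 1:])"
      using assms(3) by (simp add: layer2_def u_plus_v_def eval_nat_numeral algebra_simps)
    then have "Q = 1 * [:0, 1:]" by (metis mult_left_cancel power_not_zero u_plus_v_nonzero)
    then show ?thesis using log_concave_icoeff_mult_linear[OF log_concave_icoeff_1] by simp
  next
    case 3
    then have "a + b - 1 = 4 + (a + b - 5)" using assms(1) by simp
    then have "u_plus_v^(a + b - 1) = u_plus_v^4 * u_plus_v^(a + b - 5)"
      by (simp only: power_add)
    then have "u_plus_v^4 * Q = u_plus_v^4 * (layer2 a b * u_plus_v^(a + b - 5))"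
      using assms(3) by (simp only: mult_ac)
    then have "Q = layer2 a b * u_plus_v^(a + b - 5)" by simp
    then show ?thesis
      using log_concave_icoeff_mult_u_plus_v_power[OF log_concave_icoeff_layer2[OF assms(1,2)]] by simp
  qed
qed

lemma Acoef_eq_icoeff_layer:
  assumes "represents a b P" "1 \<le> a" "1 \<le> b" "m < a + b"
  shows "Acoef a b k (int a + int b - 1 - int m - k) = icoeff (coeff P m) k"
proof -
  have Pcoeff: "Pcoeff a b = numerator_coeff (a + b - 1) P"
    using Pcoeff_eq_numerator_coeff[OF assms(1-3)] .
  have deg: "tdeg_le (a + b - 1) P" using assms(1) by (simp add: represents_def)
  consider "k < 0" | "0 \<le> k" "k \<le> int a + int b - 1 - int m" | "int a + int b - 1 - int m < k"
    by linarith
  then show ?thesis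
  proof cases
    case 2
    then have "nat k + nat (int a + int b - 1 - int m - k) \<le> a + b - 1"
      "a + b - 1 - nat k - nat (int a + int b - 1 - int m - k) = m"
      using assms(4) by linarith+
    then show ?thesis using 2 by (simp add: Acoef_def icoeff_def Pcoeff numerator_coeff_def)
  next
    case 3
    then have "a + b - 1 < nat k + m" using assms(4) by linarith
    then show ?thesis using 3 by (simp add: Acoef_def icoeff_def tdeg_le_coeff_eq_0[OF deg])
  qed (simp add: Acoef_def icoeff_def)
qed

theorem theorem6p7:
  fixes a b :: nat and i :: int
  assumes "a \<ge> 1" and "b \<ge> 1" and "coprime a b" and "5 * a \<le> 3 * b"
  shows "(Acoef a b i (int a + int b - 3 - i))^2
           \<ge> Acoef a b (i - 1) (int a + int b - 3 - i + 1) * Acoef a b (i + 1) (int a + int b - 3 - i - 1)"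
proof -
  have "a < b" using assms(1,4) by linarith
  then obtain P where "layered_numerator a b P" using layered_numerator_exists[OF assms(3,1)] by blast
  then have rep: "represents a b P" and "low_layers a b P" by (simp_all add: layered_numerator_def)
  then have "u_plus_v^4 * coeff P 2 = u_plus_v^(a + b - 1) * layer2 a b"
    using \<open>a < b\<close> assms(1) by (simp add: low_layers_def)
  then have "log_concave_seq (icoeff (coeff P 2))"
    by (rule log_concave_icoeff_second_layer[OF assms(1,4)])
  then have "icoeff (coeff P 2) (i - 1) * icoeff (coeff P 2) (i + 1) \<le> (icoeff (coeff P 2) i)^2"
    by (simp add: log_concave_seq_def)
  moreover have A: "Acoef a b k (int a + int b - 3 - k) = icoeff (coeff P 2) k" for k
    using Acoef_eq_icoeff_layer[OF rep assms(1,2), of 2 k] \<open>a < b\<close> assms(1) by simp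
  moreover have "int a + int b - 3 - i + 1 = int a + int b - 3 - (i - 1)"
    "int a + int b - 3 - i - 1 = int a + int b - 3 - (i + 1)" by simp_all
  ultimately show ?thesis by (simp only: A)
qed

end
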